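(* Consider the Kiefer–Wolfowitz algorithm defined below with $\alpha_t=a/(u+t)^\gamma$ ($a,u>0$, $\gamma\in[0,1]$) and a fixed $\nu>0$. Assume Conditions (D1), (D2) and (D3), and suppose $$\nu\le\sqrt{\kappa/(3c)},$$ where $c$ is the constant in (D3). Then there are positive constants $\hat J,\hat I,\hat K,\hat L$ such that the following hold. - For all $t\ge0$ and $z\ge0$: $$\mathbb P\Big(\min_{x\in\mathcal X^\star}\|x_{t+1}-x\|\ge z\Big)\le \hat J e^{-\hat I t^\gamma z}.$$ - For all $t\ge1$: $$\mathbb E\Big[\min_{x\in\mathcal X^\star}\|x_{t+1}-x\|\Big]\le\frac{\hat K}{t^\gamma} \qquad\text{and}\qquad \mathbb E\Big[l(x_{t+1})-\min_{\mathcal X}l\Big]\le\frac{\hat L}{t^\gamma}.$$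
   Context: $\mathcal X\subseteq\mathbb R^d$ is a nonempty closed bounded convex set, and $\Pi_{\mathcal X}$ is Euclidean projection onto $\mathcal X$. $\hat w$ is a random variable, and $l(x,w)$ is a real function defined for all $x\in\mathbb R^d$. Set $l(x):=\mathbb E[l(x,\hat w)]$, assume $\sup_{x\in\mathcal X}\operatorname{Var}(l(x,\hat w))<\infty$, and assume $l$ is Lipschitz continuous on $\mathcal X$ with gradient (or chosen subgradient) map $\nabla l$. Let $\mathcal X^\star=\arg\min_{\mathcal X}l$. $e_i$ denotes the $i$-th unit vector. For $\nu\in\mathbb R$ write $$\mathbf l(x\pm\nu,w):=\big(l(x\pm\nu e_i,w)\big)_{i=1}^d,\qquad \mathbf l(x\pm\nu):=\big(l(x\pm\nu e_i)\big)_{i=1}^d.$$ KW algorithm: $x_0\in\mathcal X$, and for $t\ge0$ $$c_t=\frac{\mathbf l(x_t+\nu,\hat w_t^+)-\mathbf l(x_t-\nu,\hat w_t^-)}{2\nu},\qquad y_{t+1}=x_t-\alpha_tc_t,\qquad x_{t+1}=\Pi_{\mathcal X}(y_{t+1}),$$ where $\hat w_t^\pm$ are i.i.d. copies of $\hat w$, independent of each other and of $\mathcal F_t$, and $\mathcal F_{t+1}$ is generated by $\mathcal F_t$ and $\hat w_t^\pm$. Condition (D1): there is $\kappa>0$ such that for every $x\in\mathcal X$ and every $x^\star\in\mathcal X^\star$ with $\|x-x^\star\|=\min_{z\in\mathcal X^\star}\|x-z\|$, $\nabla l(x)^\top(x-x^\star)\ge\kappa\|x-x^\star\|$. Condition (D2):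 there are $\lambda>0$ and $M<\infty$ such that $\mathbb E[e^{\lambda\|c_t\|}\mid\mathcal F_t]\le M$ almost surely for all $t$. Condition (D3): there is $c>0$ such that $$\Big\|\nabla l(x)-\frac{\mathbf l(x+\nu)-\mathbf l(x-\nu)}{2\nu}\Big\|\le c\nu^2\qquad\text{for all }x\in\mathcal X.$$ *)

theory Defs
  imports "HOL-Analysis.Analysis" "HOL-Probability.Probability"
begin

definition lvec :: "(real^'n \<Rightarrow> 'w \<Rightarrow> real) \<Rightarrow> real^'n \<Rightarrow> real \<Rightarrow> 'w \<Rightarrow> real^'n" where
  "lvec l x \<nu> w = (\<chi> i. l (x + \<nu> *\<^sub>R axis i 1) w)"

definition lmean :: "'w measure \<Rightarrow> (real^'n \<Rightarrow> 'w \<Rightarrow> real) \<Rightarrow> real^'n \<Rightarrow> real" where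
  "lmean D l x = (\<integral>w. l x w \<partial>D)"

definition kw_dir :: "(real^'n \<Rightarrow> 'w \<Rightarrow> real) \<Rightarrow> real \<Rightarrow> real^'n \<Rightarrow> 'w \<Rightarrow> 'w \<Rightarrow> real^'n" where
  "kw_dir l \<nu> x wp wm = (1 / (2 * \<nu>)) *\<^sub>R (lvec l x \<nu> wp - lvec l x (-\<nu>) wm)"

primrec kw_iter :: "(real^'n) set \<Rightarrow> (real^'n \<Rightarrow> 'w \<Rightarrow> real) \<Rightarrow> real \<Rightarrow> (nat \<Rightarrow> real) \<Rightarrow> real^'n
    \<Rightarrow> (nat \<Rightarrow> 'o \<Rightarrow> 'w) \<Rightarrow> (nat \<Rightarrow> 'o \<Rightarrow> 'w) \<Rightarrow> nat \<Rightarrow> 'o \<Rightarrow> real^'n" where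
  "kw_iter X l \<nu> \<alpha> x0 Wp Wm 0 \<omega> = x0"
| "kw_iter X l \<nu> \<alpha> x0 Wp Wm (Suc t) \<omega> =
     closest_point X (kw_iter X l \<nu> \<alpha> x0 Wp Wm t \<omega>
        - \<alpha> t *\<^sub>R kw_dir l \<nu> (kw_iter X l \<nu> \<alpha> x0 Wp Wm t \<omega>) (Wp t \<omega>) (Wm t \<omega>))"

definition kw_filt :: "'o measure \<Rightarrow> 'w measure \<Rightarrow> (nat \<Rightarrow> 'o \<Rightarrow> 'w) \<Rightarrow> (nat \<Rightarrow> 'o \<Rightarrow> 'w) \<Rightarrow> nat \<Rightarrow> 'o measure" where
  "kw_filt P N Wp Wm t = sigma (space P)
     (\<Union>s\<in>{..<t}. {Wp s -` A \<inter> space P | A. A \<in> sets N} \<union> {Wm s -` A \<inter> space P | A. A \<in> sets N})"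

text \<open>t^gamma with the convention 0^0 = 1.\<close>
definition tpow :: "nat \<Rightarrow> real \<Rightarrow> real" where
  "tpow t \<gamma> = (if t = 0 then (if \<gamma> = 0 then 1 else 0) else real t powr \<gamma>)"

end

theory Submission
  imports Defs
begin

text \<open>
  Let \<open>d\<^sub>t\<close> be the distance of the iterate \<open>x\<^sub>t\<close> to the set of minimisers and
  \<open>\<phi>(y) = (exp (\<omega> y) - 1) / \<omega>\<close>.  By (D1) and (D3), and since \<open>c \<nu>\<^sup>2 \<le> \<kappa> / 3\<close>, the
  central-difference direction has mean component at least \<open>2 \<kappa> / 3 \<cdot> d\<^sub>t\<close> towards the nearest
  minimiser.  A second-order expansion of \<open>exp (\<theta> \<phi> (d))\<close> along one projected step, with the
  exponential moment (D2) absorbing the noise, gives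
  \<open>E [exp (\<theta>\<^sub>t\<^sub>+\<^sub>1 \<phi> (d\<^sub>t\<^sub>+\<^sub>1)) | F\<^sub>t] \<le> exp (- \<eta> \<kappa> / 12) exp (\<theta>\<^sub>t \<phi> (d\<^sub>t)) + C\<close>
  for \<open>\<theta>\<^sub>t = \<eta> (u + t)\<^sup>\<gamma> / a\<close> once the steps are small.  So \<open>E exp (\<theta>\<^sub>t d\<^sub>t)\<close> stays
  bounded, which gives the exponential tail bound (Chernoff) and the bound on \<open>E d\<^sub>t\<close>; the
  optimality gap is at most the Lipschitz constant of the mean loss times \<open>d\<^sub>t\<close>.  For \<open>\<gamma> = 0\<close>
  the bounds follow from the boundedness of the feasible set alone.
\<close>

lemma exp_le_quadratic: "exp (y::real) \<le> 1 + y + y\<^sup>2 * exp (max y 0) / 2"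
proof (cases "y \<ge> 0")
  case True
  obtain t where t: "\<bar>t\<bar> \<le> \<bar>y\<bar>" "exp y = (\<Sum>m<2. y ^ m / fact m) + exp t / fact 2 * y ^ 2"
    using Maclaurin_exp_le by blast
  have "exp t \<le> exp (max y 0)" using t(1) True by simp
  then have "exp t / fact 2 * y ^ 2 \<le> y\<^sup>2 * exp (max y 0) / 2"
    by (simp add: fact_numeral mult.commute mult_right_mono)
  moreover have "(\<Sum>m<2. y ^ m / fact m) = 1 + y" by (simp add: numeral_2_eq_2)
  ultimately show ?thesis using t(2) by linarith
next
  case False
  obtain t where t: "exp y = (\<Sum>m<3. y ^ m / fact m) + exp t / fact 3 * y ^ 3"
    using Maclaurin_exp_le by blast
  have "y ^ 3 \<le> 0" using False by (simp add: power_le_zero_eq)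
  then have "exp t / fact 3 * y ^ 3 \<le> 0" by (rule mult_nonneg_nonpos[rotated]) simp
  moreover have "(\<Sum>m<3. y ^ m / fact m) = 1 + y + y\<^sup>2 / 2"
    by (simp add: numeral_3_eq_3 numeral_2_eq_2 power2_eq_square)
  ultimately show ?thesis using t False by simp
qed

lemma exp_minus_one_le: "0 \<le> (y::real) \<Longrightarrow> exp y - 1 \<le> y * exp y"
  using exp_ge_add_one_self[of "-y"] mult_right_mono[of "1 - y" "exp (-y)" "exp y"]
  by (simp add: exp_minus field_simps)

lemma le_exp_div:
  assumes "0 < (lam::real)"
  shows "y \<le> exp (lam * y) / lam"
proof -
  have "lam * y \<le> exp (lam * y)" using exp_ge_add_one_self[of "lam * y"] by linarith
  then show ?thesis using assms by (simp add: field_simps)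
qed

lemma square_le_exp:
  assumes "0 < (lam::real)" "0 \<le> y"
  shows "y\<^sup>2 \<le> 2 * exp (lam * y) / lam\<^sup>2"
proof -
  have "0 \<le> lam * y" using assms by simp
  then have "(lam * y)\<^sup>2 / 2 \<le> exp (lam * y)"
    using exp_lower_Taylor_quadratic[of "lam * y"] by linarith
  then show ?thesis using assms by (simp add: field_simps power2_eq_square)
qed

lemma exp_le_one_plus_of_abs_le:
  fixes x y b n lam :: real
  assumes "x \<le> y" "\<bar>x\<bar> \<le> b * n" "0 \<le> b" "b \<le> lam / 2" "0 < lam" "0 \<le> n"
  shows "exp x \<le> 1 + y + 4 * b\<^sup>2 / lam\<^sup>2 * exp (lam * n)"
proof -
  have "x\<^sup>2 \<le> (b * n)\<^sup>2" using assms(2) power_mono[of "\<bar>x\<bar>" "b * n" 2] by simp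
  moreover have "exp (max x 0) \<le> exp (lam / 2 * n)"
    using assms(2,4,6) mult_right_mono[of b "lam / 2" n] by simp
  ultimately have "x\<^sup>2 * exp (max x 0) \<le> (b * n)\<^sup>2 * exp (lam / 2 * n)"
    by (rule mult_mono) auto
  also have "\<dots> = b\<^sup>2 * (n\<^sup>2 * exp (lam / 2 * n))" by (simp add: power_mult_distrib)
  also have "\<dots> \<le> b\<^sup>2 * (2 * exp (lam / 2 * n) / (lam / 2)\<^sup>2 * exp (lam / 2 * n))"
    using square_le_exp[of "lam / 2" n] assms by (intro mult_left_mono mult_right_mono) auto
  also have "\<dots> = 8 * b\<^sup>2 / lam\<^sup>2 * exp (lam * n)"
    by (simp add: field_simps power2_eq_square flip: exp_add)
  finally show ?thesis using exp_le_quadratic[of x] assms(1) by linarith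
qed

lemma norm_minus_scaleR_le:
  fixes v c :: "'a::real_inner"
  assumes "0 < d" "norm v = d"
  shows "norm (v - a *\<^sub>R c) \<le> d - a * (c \<bullet> v) / d + a\<^sup>2 * (norm c)\<^sup>2 / (2 * d)"
proof -
  define r where "r = norm (v - a *\<^sub>R c)"
  have "v \<bullet> v = d\<^sup>2" "c \<bullet> c = (norm c)\<^sup>2" using assms by (simp_all add: power2_norm_eq_inner[symmetric])
  then have r2: "r\<^sup>2 = d\<^sup>2 - 2 * a * (c \<bullet> v) + a\<^sup>2 * (norm c)\<^sup>2"
    unfolding r_def power2_norm_eq_inner
    by (simp add: inner_diff_left inner_diff_right inner_commute power2_eq_square algebra_simps)
  \<comment> \<open>AM-GM: \<open>r \<le> (r\<^sup>2 + d\<^sup>2) / (2 * d)\<close>\<close>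
  have "2 * d * r \<le> r\<^sup>2 + d\<^sup>2" using sum_power2_ge_zero[of "r - d" 0] by (simp add: power2_eq_square algebra_simps)
  then have "r \<le> (r\<^sup>2 + d\<^sup>2) / (2 * d)" using assms by (simp add: field_simps)
  also have "\<dots> = d - a * (c \<bullet> v) / d + a\<^sup>2 * (norm c)\<^sup>2 / (2 * d)"
    unfolding r2 using assms by (simp add: field_simps power2_eq_square)
  finally show ?thesis unfolding r_def .
qed

lemma powr_add_one_le:
  assumes "1 \<le> (x::real)" "0 \<le> g" "g \<le> 1"
  shows "(x + 1) powr g \<le> x powr g + 1"
proof -
  have "x + 1 = x * (1 + 1 / x)" using assms by (simp add: field_simps)
  then have "(x + 1) powr g = x powr g * (1 + 1 / x) powr g"
    using assms by (simp add: powr_mult)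
  also have "\<dots> \<le> x powr g * (1 + 1 / x)"
    using assms powr_mono[of g 1 "1 + 1 / x"] by (intro mult_left_mono) auto
  also have "\<dots> = x powr g + x powr g / x" using assms by (simp add: field_simps)
  also have "x powr g / x \<le> 1" using assms powr_mono[of g 1 x] by simp
  finally show ?thesis by simp
qed

lemma powr_add_one_ratio_bounds:
  assumes "1 \<le> (x::real)" "0 \<le> g" "g \<le> 1"
  shows "1 \<le> (x + 1) powr g / x powr g" "(x + 1) powr g / x powr g \<le> 2"
proof -
  have ratio: "(x + 1) powr g / x powr g = ((x + 1) / x) powr g"
    using assms by (simp add: powr_divide)
  show "1 \<le> (x + 1) powr g / x powr g"
    unfolding ratio using assms by (intro ge_one_powr_ge_zero) (auto simp: field_simps)
  have "((x + 1) / x) powr g \<le> (x + 1) / x"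
    using assms powr_mono[of g 1 "(x + 1) / x"] by (simp add: field_simps)
  also have "\<dots> \<le> 2" using assms by (simp add: field_simps)
  finally show "(x + 1) powr g / x powr g \<le> 2" unfolding ratio .
qed

lemma powr_schedule:
  fixes x \<gamma> a \<eta> :: real
  assumes "1 \<le> x" "0 \<le> \<gamma>" "\<gamma> \<le> 1" "0 < a" "0 < \<eta>"
  shows "\<eta> \<le> \<eta> * (x + 1) powr \<gamma> / a * (a / x powr \<gamma>)"
    and "\<eta> * (x + 1) powr \<gamma> / a * (a / x powr \<gamma>) \<le> 2 * \<eta>"
    and "\<eta> * x powr \<gamma> / a \<le> \<eta> * (x + 1) powr \<gamma> / a"
    and "\<eta> * (x + 1) powr \<gamma> / a - \<eta> * x powr \<gamma> / a \<le> \<eta> / a"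
proof -
  have "0 < x" using assms(1) by linarith
  then have "0 < x powr \<gamma>" by simp
  then have ratio: "\<eta> * (x + 1) powr \<gamma> / a * (a / x powr \<gamma>) = \<eta> * ((x + 1) powr \<gamma> / x powr \<gamma>)"
    using assms by (simp add: field_simps)
  show "\<eta> \<le> \<eta> * (x + 1) powr \<gamma> / a * (a / x powr \<gamma>)"
    unfolding ratio using powr_add_one_ratio_bounds(1)[OF assms(1-3)] assms(5)
    by (metis mult.right_neutral mult_left_mono less_imp_le)
  show "\<eta> * (x + 1) powr \<gamma> / a * (a / x powr \<gamma>) \<le> 2 * \<eta>"
    unfolding ratio using mult_left_mono[OF powr_add_one_ratio_bounds(2)[OF assms(1-3)], of \<eta>] assms(5)
    by (simp add: mult.commute)
  show "\<eta> * x powr \<gamma> / a \<le> \<eta> * (x + 1) powr \<gamma> / a"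
    using assms powr_mono2[of \<gamma> x "x + 1"] by (intro divide_right_mono mult_left_mono) auto
  have "\<eta> * ((x + 1) powr \<gamma> - x powr \<gamma>) \<le> \<eta> * 1"
    using powr_add_one_le[OF assms(1-3)] assms(5) by (intro mult_left_mono) auto
  then show "\<eta> * (x + 1) powr \<gamma> / a - \<eta> * x powr \<gamma> / a \<le> \<eta> / a"
    using assms(4) by (simp add: diff_divide_distrib[symmetric] right_diff_distrib divide_right_mono)
qed

lemma eventually_powr_step_le:
  fixes a b u \<gamma> :: real
  assumes "0 < \<gamma>" "0 < a" "0 < b" "0 < u"
  shows "\<exists>T0::nat. \<forall>t\<ge>T0. 1 \<le> u + real t \<and> a / (u + real t) powr \<gamma> \<le> b"
proof (intro exI allI impI)
  fix t assume t: "nat \<lceil>max 1 ((a / b) powr (1 / \<gamma>))\<rceil> \<le> t"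
  then have "max 1 ((a / b) powr (1 / \<gamma>)) \<le> u + real t" using assms(4) by linarith
  then have "1 \<le> u + real t" "((a / b) powr (1 / \<gamma>)) powr \<gamma> \<le> (u + real t) powr \<gamma>"
    using assms(1) by (auto intro: powr_mono2)
  moreover have "((a / b) powr (1 / \<gamma>)) powr \<gamma> = a / b" using assms by (simp add: powr_powr)
  ultimately show "1 \<le> u + real t \<and> a / (u + real t) powr \<gamma> \<le> b"
    using assms by (simp add: field_simps)
qed

lemma tpow_bounds:
  assumes "0 \<le> \<gamma>" "\<gamma> \<le> 1"
  shows "0 \<le> tpow t \<gamma>" "tpow t \<gamma> \<le> max 1 (real t)"
  using assms powr_mono[of \<gamma> 1 "real t"] by (auto simp: tpow_def)

section \<open>The exponential gauge\<close>

definition scaled_expm1 :: "real \<Rightarrow> real \<Rightarrow> real" where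
  "scaled_expm1 \<omega> y = (exp (\<omega> * y) - 1) / \<omega>"

lemma le_scaled_expm1: "0 < \<omega> \<Longrightarrow> y \<le> scaled_expm1 \<omega> y"
  using exp_ge_add_one_self[of "\<omega> * y"] by (simp add: scaled_expm1_def field_simps)

lemma scaled_expm1_mono: "0 < \<omega> \<Longrightarrow> y \<le> y' \<Longrightarrow> scaled_expm1 \<omega> y \<le> scaled_expm1 \<omega> y'"
  by (simp add: scaled_expm1_def divide_right_mono)

lemma scaled_expm1_le_exp: "0 < \<omega> \<Longrightarrow> scaled_expm1 \<omega> y \<le> exp (\<omega> * y) / \<omega>"
  by (simp add: scaled_expm1_def divide_right_mono)

lemma scaled_expm1_le_linear:
  assumes "0 < \<omega>" "0 \<le> y" "y \<le> R"
  shows "scaled_expm1 \<omega> y \<le> exp (\<omega> * R) * y"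
proof -
  have "exp (\<omega> * y) - 1 \<le> \<omega> * y * exp (\<omega> * y)" using exp_minus_one_le[of "\<omega> * y"] assms by simp
  also have "\<dots> \<le> \<omega> * y * exp (\<omega> * R)" using assms by (intro mult_left_mono) auto
  finally show ?thesis using assms by (simp add: scaled_expm1_def field_simps)
qed

lemma scaled_expm1_lipschitz:
  assumes "0 < \<omega>" "0 \<le> a" "a \<le> R" "0 \<le> b" "b \<le> R"
  shows "\<bar>scaled_expm1 \<omega> a - scaled_expm1 \<omega> b\<bar> \<le> exp (\<omega> * R) * \<bar>a - b\<bar>"
proof -
  have main: "scaled_expm1 \<omega> a - scaled_expm1 \<omega> b \<le> exp (\<omega> * R) * (a - b)"
    if "0 \<le> b" "b \<le> a" "a \<le> R" for a b
  proof -
    have "exp (\<omega> * a) - exp (\<omega> * b) = exp (\<omega> * b) * (exp (\<omega> * (a - b)) - 1)"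
      by (simp add: algebra_simps flip: exp_add)
    also have "\<dots> \<le> exp (\<omega> * b) * (\<omega> * (a - b) * exp (\<omega> * (a - b)))"
      using exp_minus_one_le[of "\<omega> * (a - b)"] that assms(1) by (intro mult_left_mono) auto
    also have "\<dots> = \<omega> * (a - b) * exp (\<omega> * a)" by (simp add: algebra_simps flip: exp_add)
    also have "\<dots> \<le> \<omega> * (a - b) * exp (\<omega> * R)" using that assms(1) by (intro mult_left_mono) auto
    finally show ?thesis using assms(1) by (simp add: scaled_expm1_def field_simps)
  qed
  show ?thesis
  proof (cases "b \<le> a")
    case True
    then show ?thesis using main[of b a] scaled_expm1_mono[OF assms(1) True] assms by simp
  next
    case False
    then have "a \<le> b" by simp
    then show ?thesis using main[of a b] scaled_expm1_mono[OF assms(1) \<open>a \<le> b\<close>] assms by simp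
  qed
qed

lemma scaled_expm1_taylor:
  assumes "0 < \<omega>" "0 \<le> a" "a \<le> R" "b \<le> R"
  shows "scaled_expm1 \<omega> b
    \<le> scaled_expm1 \<omega> a + exp (\<omega> * a) * (b - a) + \<omega> * exp (\<omega> * R) * (b - a)\<^sup>2 / 2"
proof -
  let ?y = "\<omega> * (b - a)"
  have bound: "exp (\<omega> * a) * exp (max ?y 0) \<le> exp (\<omega> * R)"
    using assms mult_left_mono[of a R \<omega>] mult_left_mono[of b R \<omega>]
    by (auto simp: max_def algebra_simps simp flip: exp_add)
  have "exp (\<omega> * b) = exp (\<omega> * a) * exp ?y" by (simp add: algebra_simps flip: exp_add)
  also have "\<dots> \<le> exp (\<omega> * a) * (1 + ?y + ?y\<^sup>2 * exp (max ?y 0) / 2)"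
    by (intro mult_left_mono exp_le_quadratic) simp
  also have "\<dots> = exp (\<omega> * a) * (1 + ?y) + ?y\<^sup>2 * (exp (\<omega> * a) * exp (max ?y 0)) / 2"
    by (simp add: algebra_simps)
  also have "\<dots> \<le> exp (\<omega> * a) * (1 + ?y) + ?y\<^sup>2 * exp (\<omega> * R) / 2"
    using bound by (intro add_left_mono divide_right_mono mult_left_mono) auto
  finally have "exp (\<omega> * b) \<le> exp (\<omega> * a) * (1 + ?y) + ?y\<^sup>2 * exp (\<omega> * R) / 2" .
  then have "(exp (\<omega> * b) - exp (\<omega> * a)) / \<omega> \<le> (exp (\<omega> * a) * ?y + ?y\<^sup>2 * exp (\<omega> * R) / 2) / \<omega>"
    using assms(1) by (intro divide_right_mono) (auto simp: algebra_simps)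
  then show ?thesis
    using assms(1) by (simp add: scaled_expm1_def field_simps power2_eq_square)
qed

lemma exp_scaled_expm1_step_le:
  fixes \<theta> \<omega> R d0 d1 \<alpha> w n lam :: real
  assumes "0 < \<omega>" "0 \<le> \<theta>" "0 < d0" "d0 \<le> R" "0 \<le> d1" "d1 \<le> R"
    and "0 \<le> \<alpha>" "0 \<le> n" "0 < lam"
    and diff: "\<bar>d1 - d0\<bar> \<le> \<alpha> * n"
    and descent: "d1 - d0 \<le> - \<alpha> * w / d0 + \<alpha>\<^sup>2 * n\<^sup>2 / (2 * d0)"
    and small: "\<theta> * \<alpha> * exp (\<omega> * R) \<le> lam / 2"
  shows "exp (\<theta> * scaled_expm1 \<omega> d1) \<le> exp (\<theta> * scaled_expm1 \<omega> d0) *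
    (1 - \<theta> * \<alpha> * exp (\<omega> * d0) / d0 * w
       + (\<theta> * \<alpha>\<^sup>2 * (exp (\<omega> * d0) / d0 + \<omega> * exp (\<omega> * R)) + 4 * (\<theta> * \<alpha> * exp (\<omega> * R))\<^sup>2)
         / lam\<^sup>2 * exp (lam * n))"
proof -
  define E e where "E = exp (\<omega> * R)" and "e = exp (\<omega> * d0)"
  define x where "x = \<theta> * (scaled_expm1 \<omega> d1 - scaled_expm1 \<omega> d0)"
  have "(d1 - d0)\<^sup>2 \<le> (\<alpha> * n)\<^sup>2"
    using diff power_mono[of "\<bar>d1 - d0\<bar>" "\<alpha> * n" 2] by simp
  then have Taylor: "x \<le> \<theta> * (e * (- \<alpha> * w / d0 + \<alpha>\<^sup>2 * n\<^sup>2 / (2 * d0)) + \<omega> * E * (\<alpha> * n)\<^sup>2 / 2)"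
    using scaled_expm1_taylor[of \<omega> d0 R d1] descent assms(1-6) unfolding x_def E_def e_def
    by (smt (verit, best) divide_right_mono exp_gt_zero mult_left_mono mult_pos_pos)
  have "\<theta> * (e * (- \<alpha> * w / d0 + \<alpha>\<^sup>2 * n\<^sup>2 / (2 * d0)) + \<omega> * E * (\<alpha> * n)\<^sup>2 / 2)
      = - \<theta> * \<alpha> * e / d0 * w + \<theta> * \<alpha>\<^sup>2 * (e / d0 + \<omega> * E) * (n\<^sup>2 / 2)"
    using assms(3) by (simp add: field_simps)
  also have "\<dots> \<le> - \<theta> * \<alpha> * e / d0 * w + \<theta> * \<alpha>\<^sup>2 * (e / d0 + \<omega> * E) * (exp (lam * n) / lam\<^sup>2)"
    using square_le_exp[OF assms(9,8)] assms(1-3)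
    by (intro add_left_mono mult_left_mono) (auto simp: E_def e_def field_simps)
  finally have x_le: "x \<le> - \<theta> * \<alpha> * e / d0 * w + \<theta> * \<alpha>\<^sup>2 * (e / d0 + \<omega> * E) / lam\<^sup>2 * exp (lam * n)"
    using Taylor by simp
  have "\<bar>x\<bar> = \<theta> * \<bar>scaled_expm1 \<omega> d1 - scaled_expm1 \<omega> d0\<bar>" using assms(2) by (simp add: x_def abs_mult)
  also have "\<dots> \<le> \<theta> * (E * (\<alpha> * n))"
    using scaled_expm1_lipschitz[of \<omega> d1 R d0] diff assms(1-6) unfolding E_def
    by (intro mult_left_mono) (auto intro: order_trans mult_left_mono)
  finally have "\<bar>x\<bar> \<le> \<theta> * \<alpha> * E * n" by (simp add: mult_ac)
  then have "exp x \<le> 1 + (- \<theta> * \<alpha> * e / d0 * w + \<theta> * \<alpha>\<^sup>2 * (e / d0 + \<omega> * E) / lam\<^sup>2 * exp (lam * n))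
      + 4 * (\<theta> * \<alpha> * E)\<^sup>2 / lam\<^sup>2 * exp (lam * n)"
    using exp_le_one_plus_of_abs_le[OF x_le _ _ small[folded E_def]] assms(2,7,8,9) by (simp add: E_def)
  also have "\<dots> = 1 - \<theta> * \<alpha> * e / d0 * w
      + (\<theta> * \<alpha>\<^sup>2 * (e / d0 + \<omega> * E) + 4 * (\<theta> * \<alpha> * E)\<^sup>2) / lam\<^sup>2 * exp (lam * n)"
    by (simp add: algebra_simps add_divide_distrib)
  finally have "exp (\<theta> * scaled_expm1 \<omega> d0) * exp x \<le> exp (\<theta> * scaled_expm1 \<omega> d0) * \<dots>"
    by (rule mult_left_mono) simp
  moreover have "exp (\<theta> * scaled_expm1 \<omega> d1) = exp (\<theta> * scaled_expm1 \<omega> d0) * exp x"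
    by (simp add: x_def algebra_simps flip: exp_add)
  ultimately show ?thesis by (simp add: E_def e_def)
qed

section \<open>One projected step\<close>

lemma infdist_closest_point_diff_le:
  assumes "closed X" "convex X" "x \<in> X"
  shows "\<bar>infdist (closest_point X y) S - infdist x S\<bar> \<le> dist y x"
proof -
  have "\<bar>infdist (closest_point X y) S - infdist x S\<bar> \<le> dist (closest_point X y) (closest_point X x)"
    using infdist_triangle_abs closest_point_self[OF assms(3)] by metis
  also have "\<dots> \<le> dist y x" using assms by (intro closest_point_lipschitz) auto
  finally show ?thesis .
qed

lemma infdist_closest_point_le:
  assumes "closed X" "convex X" "p \<in> S" "p \<in> X"
  shows "infdist (closest_point X y) S \<le> dist y p"
proof -
  have "infdist (closest_point X y) S \<le> dist (closest_point X y) (closest_point X p)"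
    using infdist_le[OF assms(3)] closest_point_self[OF assms(4)] by simp
  also have "\<dots> \<le> dist y p" using assms by (intro closest_point_lipschitz) auto
  finally show ?thesis .
qed

text \<open>One projected step \<open>x \<mapsto> closest_point X (x - \<alpha> c)\<close> with a random direction \<open>c\<close>
  whose mean points towards \<open>S\<close> at rate \<open>2 \<kappa> / 3\<close>, measured by the potential
  \<open>exp (\<theta> \<cdot> scaled_expm1 \<omega> (infdist _ S))\<close> with exponent \<open>\<theta>0\<close> before and \<open>\<theta>1\<close> after the step.\<close>

locale one_step_drift =
  fixes Q :: "'z measure" and c :: "'z \<Rightarrow> 'a::euclidean_space"
    and X S :: "'a set" and x :: 'a
    and R lam M \<kappa> \<omega> \<alpha> \<eta> \<theta>0 \<theta>1 :: real
  assumes prob: "prob_space Q" and c_measurable [measurable]: "c \<in> borel_measurable Q"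
    and moment: "(\<integral>\<^sup>+z. ennreal (exp (lam * norm (c z))) \<partial>Q) \<le> ennreal M"
    and X: "closed X" "convex X" and x: "x \<in> X"
    and S: "closed S" "S \<noteq> {}" "S \<subseteq> X" and R: "\<forall>y\<in>X. infdist y S \<le> R"
    and drift: "\<And>p. p \<in> S \<Longrightarrow> dist x p = infdist x S \<Longrightarrow>
      2 * \<kappa> / 3 * infdist x S \<le> (\<integral>z. c z \<bullet> (x - p) \<partial>Q)"
    and pos: "0 < lam" "0 \<le> M" "0 < \<kappa>" "0 < \<omega>" "0 < \<alpha>" "0 < \<eta>"
    and \<theta>1: "\<eta> \<le> \<theta>1 * \<alpha>" "\<theta>1 * \<alpha> \<le> 2 * \<eta>"
    and \<theta>0: "0 \<le> \<theta>0" "\<theta>0 \<le> \<theta>1" "(\<theta>1 - \<theta>0) / \<omega> \<le> \<eta> * \<kappa> / 6"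
    and small_\<eta>: "2 * \<eta> * exp (\<omega> * R) \<le> lam / 2"
      "16 * \<eta> * (exp (\<omega> * R))\<^sup>2 * M / lam\<^sup>2 \<le> \<kappa> / 12"
    and small_\<alpha>: "\<alpha> * \<omega> * exp (\<omega> * R) * M / lam\<^sup>2 \<le> \<kappa> / 24"
begin

abbreviation "d0 \<equiv> infdist x S"
abbreviation "d1 z \<equiv> infdist (closest_point X (x - \<alpha> *\<^sub>R c z)) S"
abbreviation "F z \<equiv> exp (lam * norm (c z))"

interpretation Q: prob_space Q by (fact prob)

lemma d0_bounds: "0 \<le> d0" "d0 \<le> R"
  using R x by (auto simp: infdist_nonneg)

lemma d1_bounds: "0 \<le> d1 z" "d1 z \<le> R"
  using R closest_point_in_set[OF X(1)] S(3) x by (auto simp: infdist_nonneg)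

lemma d1_diff: "\<bar>d1 z - d0\<bar> \<le> \<alpha> * norm (c z)"
  using infdist_closest_point_diff_le[OF X x, of "x - \<alpha> *\<^sub>R c z" S] pos by (simp add: dist_norm)

lemma exp_norm_integrable: "integrable Q F"
  using moment by (intro integrableI_nonneg) (auto simp: top.not_eq_extremum intro: le_less_trans)

lemma integral_exp_norm_le: "(\<integral>z. F z \<partial>Q) \<le> M"
proof -
  have "ennreal (\<integral>z. F z \<partial>Q) = (\<integral>\<^sup>+z. ennreal (F z) \<partial>Q)"
    using exp_norm_integrable by (simp add: nn_integral_eq_integral)
  then have "ennreal (\<integral>z. F z \<partial>Q) \<le> ennreal M" using moment by simp
  then show ?thesis using pos by (simp add: ennreal_le_iff)
qed

lemma inner_integrable: "integrable Q (\<lambda>z. c z \<bullet> v)"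
proof (rule Bochner_Integration.integrable_bound[OF integrable_mult_right[OF exp_norm_integrable]])
  show "(\<lambda>z. c z \<bullet> v) \<in> borel_measurable Q" by measurable
  show "AE z in Q. norm (c z \<bullet> v) \<le> norm (norm v / lam * F z)"
  proof (rule AE_I2)
    fix z
    have "norm (c z \<bullet> v) \<le> norm (c z) * norm v" using Cauchy_Schwarz_ineq2 by simp
    also have "\<dots> \<le> F z / lam * norm v"
      using le_exp_div[OF pos(1), of "norm (c z)"] by (intro mult_right_mono) auto
    finally show "norm (c z \<bullet> v) \<le> norm (norm v / lam * F z)" using pos by (simp add: mult.commute)
  qed
qed

lemma potential_measurable [measurable]:
  "(\<lambda>z. exp (\<theta>1 * scaled_expm1 \<omega> (d1 z))) \<in> borel_measurable Q"
proof -
  have "continuous_on UNIV (\<lambda>y. infdist (closest_point X (x - \<alpha> *\<^sub>R y)) S)"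
    using X x by (intro continuous_on_infdist continuous_on_compose2[OF continuous_on_closest_point])
      (auto intro!: continuous_intros)
  then have "(\<lambda>z. d1 z) \<in> borel_measurable Q"
    by (rule borel_measurable_continuous_on[OF _ c_measurable])
  then show ?thesis unfolding scaled_expm1_def by measurable
qed

lemma potential_integrable: "integrable Q (\<lambda>z. exp (\<theta>1 * scaled_expm1 \<omega> (d1 z)))"
proof (rule Bochner_Integration.integrable_bound[OF Q.integrable_const potential_measurable], rule AE_I2)
  fix z
  have "scaled_expm1 \<omega> (d1 z) \<le> scaled_expm1 \<omega> R"
    using d1_bounds pos by (intro scaled_expm1_mono) auto
  then show "norm (exp (\<theta>1 * scaled_expm1 \<omega> (d1 z))) \<le> norm (exp (\<theta>1 * scaled_expm1 \<omega> R))"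
    using \<theta>0 by (simp add: mult_left_mono)
qed

text \<open>Close to \<open>S\<close> the potential is controlled by the exponential moment of \<open>c\<close> alone;
  far from \<open>S\<close> the mean drift of \<open>c\<close> towards \<open>S\<close> dominates the second-order terms.\<close>

lemma close_case:
  assumes "d0 \<le> 3 * M / (lam\<^sup>2 * \<kappa>) * \<alpha>"
  shows "(\<integral>\<^sup>+z. ennreal (exp (\<theta>1 * scaled_expm1 \<omega> (d1 z))) \<partial>Q)
    \<le> ennreal (exp (6 * \<eta> * exp (\<omega> * R) * M / (lam\<^sup>2 * \<kappa>)) * M)"
proof -
  define b where "b = 3 * M / (lam\<^sup>2 * \<kappa>)"
  have b: "0 \<le> b" using pos by (simp add: b_def)
  have pointwise: "exp (\<theta>1 * scaled_expm1 \<omega> (d1 z)) \<le> exp (2 * \<eta> * exp (\<omega> * R) * b) * F z" for z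
  proof -
    have "scaled_expm1 \<omega> (d1 z) \<le> exp (\<omega> * R) * d1 z"
      using scaled_expm1_le_linear pos d1_bounds by blast
    also have "\<dots> \<le> exp (\<omega> * R) * (\<alpha> * (b + norm (c z)))"
      using d1_diff[of z] assms by (intro mult_left_mono) (auto simp: b_def algebra_simps)
    finally have "\<theta>1 * scaled_expm1 \<omega> (d1 z) \<le> \<theta>1 * (exp (\<omega> * R) * (\<alpha> * (b + norm (c z))))"
      using \<theta>0 by (intro mult_left_mono) auto
    also have "\<dots> = (\<theta>1 * \<alpha>) * (exp (\<omega> * R) * (b + norm (c z)))" by (simp add: mult_ac)
    also have "\<dots> \<le> 2 * \<eta> * (exp (\<omega> * R) * (b + norm (c z)))"
      using \<theta>1 b by (intro mult_right_mono) auto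
    also have "\<dots> \<le> 2 * \<eta> * exp (\<omega> * R) * b + lam * norm (c z)"
      using small_\<eta>(1) pos mult_right_mono[of "2 * \<eta> * exp (\<omega> * R)" lam "norm (c z)"]
      by (simp add: algebra_simps)
    finally show ?thesis by (simp add: exp_add[symmetric])
  qed
  have "(\<integral>\<^sup>+z. ennreal (exp (\<theta>1 * scaled_expm1 \<omega> (d1 z))) \<partial>Q)
      \<le> (\<integral>\<^sup>+z. ennreal (exp (2 * \<eta> * exp (\<omega> * R) * b)) * ennreal (F z) \<partial>Q)"
    using pointwise by (intro nn_integral_mono) (simp add: ennreal_mult[symmetric] ennreal_leI)
  also have "\<dots> = ennreal (exp (2 * \<eta> * exp (\<omega> * R) * b)) * (\<integral>\<^sup>+z. ennreal (F z) \<partial>Q)"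
    by (rule nn_integral_cmult) measurable
  also have "\<dots> \<le> ennreal (exp (2 * \<eta> * exp (\<omega> * R) * b)) * ennreal M"
    using moment by (rule mult_left_mono) simp
  also have "2 * \<eta> * exp (\<omega> * R) * b = 6 * \<eta> * exp (\<omega> * R) * M / (lam\<^sup>2 * \<kappa>)"
    by (simp add: b_def)
  finally show ?thesis using pos by (simp add: ennreal_mult[symmetric])
qed

lemma far_case_arithmetic:
  assumes far: "3 * M / (lam\<^sup>2 * \<kappa>) * \<alpha> < d0"
  shows "exp (\<theta>1 * scaled_expm1 \<omega> d0) *
      (1 - \<theta>1 * \<alpha> * exp (\<omega> * d0) / d0 * (2 * \<kappa> / 3 * d0)
         + (\<theta>1 * \<alpha>\<^sup>2 * (exp (\<omega> * d0) / d0 + \<omega> * exp (\<omega> * R))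
            + 4 * (\<theta>1 * \<alpha> * exp (\<omega> * R))\<^sup>2) / lam\<^sup>2 * M)
    \<le> exp (- (\<eta> * \<kappa> / 12)) * exp (\<theta>0 * scaled_expm1 \<omega> d0)"
proof -
  define s e E where "s = \<theta>1 * \<alpha>" and "e = exp (\<omega> * d0)" and "E = exp (\<omega> * R)"
  define q where "q = s * e * \<kappa> / 3"
  have "0 \<le> 3 * M / (lam\<^sup>2 * \<kappa>) * \<alpha>" using pos by simp
  then have d0: "0 < d0" using far by linarith
  have e: "1 \<le> e" using d0 pos by (simp add: e_def)
  have s: "\<eta> \<le> s" "s \<le> 2 * \<eta>" using \<theta>1 by (simp_all add: s_def)
  have far': "\<alpha> * M / (d0 * lam\<^sup>2) \<le> \<kappa> / 3"
    using far d0 pos by (simp add: field_simps)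
  have "4 * s * E\<^sup>2 * M / lam\<^sup>2 \<le> 8 * \<eta> * E\<^sup>2 * M / lam\<^sup>2"
    using s pos by (intro divide_right_mono mult_right_mono) auto
  then have small_s: "4 * s * E\<^sup>2 * M / lam\<^sup>2 \<le> \<kappa> / 24" using small_\<eta>(2) by (simp add: E_def)
  have "(\<theta>1 * \<alpha>\<^sup>2 * (e / d0 + \<omega> * E) + 4 * (\<theta>1 * \<alpha> * E)\<^sup>2) / lam\<^sup>2 * M
      = s * e * (\<alpha> * M / (d0 * lam\<^sup>2)) + s * (\<alpha> * \<omega> * E * M / lam\<^sup>2) + s * (4 * s * E\<^sup>2 * M / lam\<^sup>2)"
    using d0 pos by (simp add: s_def field_simps power2_eq_square)
  also have "\<dots> \<le> s * e * (\<kappa> / 3) + s * (\<kappa> / 24) + s * (\<kappa> / 24)"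
    using far' small_\<alpha> small_s s e pos by (intro add_mono mult_left_mono) (auto simp: E_def)
  also have "\<dots> \<le> q + q / 4"
    using mult_left_mono[OF e, of s] s pos by (simp add: q_def field_simps)
  finally have "1 - \<theta>1 * \<alpha> * e / d0 * (2 * \<kappa> / 3 * d0)
      + (\<theta>1 * \<alpha>\<^sup>2 * (e / d0 + \<omega> * E) + 4 * (\<theta>1 * \<alpha> * E)\<^sup>2) / lam\<^sup>2 * M \<le> 1 - 3 * q / 4"
    using d0 by (simp add: q_def s_def field_simps)
  also have "\<dots> \<le> exp (- (3 * q / 4))" using exp_ge_add_one_self[of "- (3 * q / 4)"] by simp
  finally have "exp (\<theta>1 * scaled_expm1 \<omega> d0) *
      (1 - \<theta>1 * \<alpha> * e / d0 * (2 * \<kappa> / 3 * d0)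
         + (\<theta>1 * \<alpha>\<^sup>2 * (e / d0 + \<omega> * E) + 4 * (\<theta>1 * \<alpha> * E)\<^sup>2) / lam\<^sup>2 * M)
      \<le> exp (\<theta>1 * scaled_expm1 \<omega> d0) * exp (- (3 * q / 4))"
    by (rule mult_left_mono) simp
  also have "\<dots> = exp (\<theta>0 * scaled_expm1 \<omega> d0 + (\<theta>1 - \<theta>0) * scaled_expm1 \<omega> d0 - 3 * q / 4)"
    by (simp add: algebra_simps flip: exp_add)
  finally have inner: "exp (\<theta>1 * scaled_expm1 \<omega> d0) *
      (1 - \<theta>1 * \<alpha> * e / d0 * (2 * \<kappa> / 3 * d0)
         + (\<theta>1 * \<alpha>\<^sup>2 * (e / d0 + \<omega> * E) + 4 * (\<theta>1 * \<alpha> * E)\<^sup>2) / lam\<^sup>2 * M)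
      \<le> exp (\<theta>0 * scaled_expm1 \<omega> d0 + (\<theta>1 - \<theta>0) * scaled_expm1 \<omega> d0 - 3 * q / 4)" .
  have "(\<theta>1 - \<theta>0) * scaled_expm1 \<omega> d0 \<le> (\<theta>1 - \<theta>0) / \<omega> * e"
    using scaled_expm1_le_exp[of \<omega> d0] \<theta>0 pos
    by (auto simp: e_def intro: order_trans[OF mult_left_mono])
  also have "\<dots> \<le> \<eta> * \<kappa> / 6 * e" using \<theta>0 e by (intro mult_right_mono) auto
  also have "\<dots> \<le> q / 2" using s e pos by (simp add: q_def field_simps mult_right_mono)
  finally have "(\<theta>1 - \<theta>0) * scaled_expm1 \<omega> d0 \<le> q / 2" .
  moreover have "\<eta> * \<kappa> / 3 \<le> q"
    unfolding q_def using mult_right_mono[OF mult_mono[of \<eta> s 1 e], of "\<kappa> / 3"] s e pos by simp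
  ultimately have "exp (\<theta>0 * scaled_expm1 \<omega> d0 + (\<theta>1 - \<theta>0) * scaled_expm1 \<omega> d0 - 3 * q / 4)
      \<le> exp (\<theta>0 * scaled_expm1 \<omega> d0 - \<eta> * \<kappa> / 12)"
    by simp
  also have "\<dots> = exp (- (\<eta> * \<kappa> / 12)) * exp (\<theta>0 * scaled_expm1 \<omega> d0)"
    by (simp flip: exp_add)
  finally show ?thesis using inner by (simp add: e_def E_def)
qed

lemma far_case:
  assumes far: "3 * M / (lam\<^sup>2 * \<kappa>) * \<alpha> < d0"
  shows "(\<integral>z. exp (\<theta>1 * scaled_expm1 \<omega> (d1 z)) \<partial>Q)
    \<le> exp (- (\<eta> * \<kappa> / 12)) * exp (\<theta>0 * scaled_expm1 \<omega> d0)"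
proof -
  have "0 \<le> 3 * M / (lam\<^sup>2 * \<kappa>) * \<alpha>" using pos by simp
  then have d0: "0 < d0" using far by linarith
  obtain p where p: "p \<in> S" "d0 = dist x p" using infdist_attains_inf[OF S(1,2)] by metis
  define v where "v = x - p"
  have v: "norm v = d0" using p by (simp add: v_def dist_norm)
  define A k1 k2 where "A = exp (\<theta>1 * scaled_expm1 \<omega> d0)"
    and "k1 = \<theta>1 * \<alpha> * exp (\<omega> * d0) / d0"
    and "k2 = (\<theta>1 * \<alpha>\<^sup>2 * (exp (\<omega> * d0) / d0 + \<omega> * exp (\<omega> * R))
               + 4 * (\<theta>1 * \<alpha> * exp (\<omega> * R))\<^sup>2) / lam\<^sup>2"
  have k: "0 \<le> k1" "0 \<le> k2" using \<theta>0 pos d0 by (simp_all add: k1_def k2_def)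
  have "\<theta>1 * \<alpha> * exp (\<omega> * R) \<le> 2 * \<eta> * exp (\<omega> * R)" using \<theta>1 by (intro mult_right_mono) auto
  then have small: "\<theta>1 * \<alpha> * exp (\<omega> * R) \<le> lam / 2" using small_\<eta>(1) by linarith
  have pointwise: "exp (\<theta>1 * scaled_expm1 \<omega> (d1 z)) \<le> A * (1 - k1 * (c z \<bullet> v) + k2 * F z)" for z
  proof -
    have "d1 z \<le> dist (x - \<alpha> *\<^sub>R c z) p"
      using infdist_closest_point_le[OF X p(1)] S(3) p(1) by blast
    also have "\<dots> = norm (v - \<alpha> *\<^sub>R c z)" by (simp add: dist_norm v_def algebra_simps)
    also have "\<dots> \<le> d0 - \<alpha> * (c z \<bullet> v) / d0 + \<alpha>\<^sup>2 * (norm (c z))\<^sup>2 / (2 * d0)"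
      by (rule norm_minus_scaleR_le[OF d0 v])
    finally have "d1 z - d0 \<le> - \<alpha> * (c z \<bullet> v) / d0 + \<alpha>\<^sup>2 * (norm (c z))\<^sup>2 / (2 * d0)" by simp
    then show ?thesis
      using exp_scaled_expm1_step_le[of \<omega> \<theta>1 d0 R "d1 z" \<alpha> "norm (c z)" lam "c z \<bullet> v"]
        d1_diff[of z] d1_bounds[of z] d0_bounds d0 pos \<theta>0 small
      unfolding A_def k1_def k2_def by simp
  qed
  have "(\<integral>z. exp (\<theta>1 * scaled_expm1 \<omega> (d1 z)) \<partial>Q) \<le> (\<integral>z. A * (1 - k1 * (c z \<bullet> v) + k2 * F z) \<partial>Q)"
    using pointwise potential_integrable inner_integrable exp_norm_integrable
    by (intro integral_mono) (auto simp: algebra_simps)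
  also have "\<dots> = A * (1 - k1 * (\<integral>z. c z \<bullet> v \<partial>Q) + k2 * (\<integral>z. F z \<partial>Q))"
    using inner_integrable exp_norm_integrable by (simp add: algebra_simps Q.prob_space)
  also have "\<dots> \<le> A * (1 - k1 * (2 * \<kappa> / 3 * d0) + k2 * M)"
    using drift[OF p(1) p(2)[symmetric]] integral_exp_norm_le k
    by (intro mult_left_mono add_mono diff_left_mono mult_left_mono) (auto simp: A_def v_def)
  also have "\<dots> \<le> exp (- (\<eta> * \<kappa> / 12)) * exp (\<theta>0 * scaled_expm1 \<omega> d0)"
    using far_case_arithmetic[OF far] by (simp add: A_def k1_def k2_def)
  finally show ?thesis .
qed

theorem drift_bound:
  "(\<integral>\<^sup>+z. ennreal (exp (\<theta>1 * scaled_expm1 \<omega> (d1 z))) \<partial>Q)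
    \<le> ennreal (exp (- (\<eta> * \<kappa> / 12)) * exp (\<theta>0 * scaled_expm1 \<omega> d0)
               + exp (6 * \<eta> * exp (\<omega> * R) * M / (lam\<^sup>2 * \<kappa>)) * M)"
proof (cases "d0 \<le> 3 * M / (lam\<^sup>2 * \<kappa>) * \<alpha>")
  case True
  show ?thesis by (rule order_trans[OF close_case[OF True]]) (simp add: ennreal_leI)
next
  case False
  have "(\<integral>\<^sup>+z. ennreal (exp (\<theta>1 * scaled_expm1 \<omega> (d1 z))) \<partial>Q)
      = ennreal (\<integral>z. exp (\<theta>1 * scaled_expm1 \<omega> (d1 z)) \<partial>Q)"
    using potential_integrable by (simp add: nn_integral_eq_integral)
  also have "\<dots> \<le> ennreal (exp (- (\<eta> * \<kappa> / 12)) * exp (\<theta>0 * scaled_expm1 \<omega> d0)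
               + exp (6 * \<eta> * exp (\<omega> * R) * M / (lam\<^sup>2 * \<kappa>)) * M)"
    using far_case False pos(2) by (intro ennreal_leI) (simp add: add_increasing2)
  finally show ?thesis .
qed

end

lemma closed_argmin:
  fixes f :: "'a::metric_space \<Rightarrow> real"
  assumes "compact X" "continuous_on X f"
  shows "closed {x\<in>X. \<forall>y\<in>X. f x \<le> f y}"
proof (cases "X = {}")
  case False
  then obtain p where p: "p \<in> X" "\<forall>y\<in>X. f p \<le> f y"
    using continuous_attains_inf[OF assms(1) _ assms(2)] by blast
  then have "{x\<in>X. \<forall>y\<in>X. f x \<le> f y} = X \<inter> f -` {..f p}" by (auto intro: order_trans)
  then show ?thesis
    using continuous_closed_preimage[OF assms(2) compact_imp_closed[OF assms(1)] closed_atMost] by simp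
qed simp

lemma argmin_nonempty:
  fixes f :: "'a::metric_space \<Rightarrow> real"
  assumes "compact X" "X \<noteq> {}" "continuous_on X f"
  shows "{x\<in>X. \<forall>y\<in>X. f x \<le> f y} \<noteq> {}"
  using continuous_attains_inf[OF assms] by blast

lemma optimality_gap_le_lipschitz:
  fixes f :: "'a::heine_borel \<Rightarrow> real"
  assumes lip: "C-lipschitz_on X f" and x: "x \<in> X"
    and S: "S = {x\<in>X. \<forall>y\<in>X. f x \<le> f y}" "closed S" "S \<noteq> {}"
  shows "0 \<le> f x - (INF y\<in>X. f y)" "f x - (INF y\<in>X. f y) \<le> C * infdist x S"
proof -
  obtain p where p: "p \<in> S" "infdist x S = dist x p" using infdist_attains_inf[OF S(2,3)] by metis
  have inf: "(INF y\<in>X. f y) = f p" using p S(1) by (intro cInf_eq_minimum) auto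
  show "0 \<le> f x - (INF y\<in>X. f y)" using inf p S(1) x by auto
  have "f x - f p \<le> dist (f x) (f p)" by (simp add: dist_real_def)
  also have "\<dots> \<le> C * dist x p" using p S(1) x by (intro lipschitz_onD[OF lip]) auto
  finally show "f x - (INF y\<in>X. f y) \<le> C * infdist x S" using inf p by simp
qed

lemma infdist_bounded:
  fixes X S :: "'a::real_normed_vector set"
  assumes "bounded X" "S \<noteq> {}" "S \<subseteq> X"
  obtains R where "0 < R" "\<forall>y\<in>X. infdist y S \<le> R"
proof -
  obtain B where B: "\<forall>y\<in>X. norm y \<le> B" using assms(1) by (auto simp: bounded_iff)
  obtain p where p: "p \<in> S" using assms(2) by blast
  have "infdist y S \<le> 2 * B" if "y \<in> X" for y
  proof -
    have "infdist y S \<le> dist y p" by (rule infdist_le[OF p])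
    also have "\<dots> \<le> norm y + norm p" by (simp add: dist_norm norm_triangle_ineq4)
    also have "\<dots> \<le> 2 * B" using B that p assms(3) by (smt (verit) subsetD)
    finally show ?thesis .
  qed
  moreover have "0 \<le> B" using B p assms(3) norm_ge_zero order_trans by blast
  ultimately show ?thesis by (intro that[of "2 * B + 1"]) force+
qed

section \<open>Probabilistic tools\<close>

lemma borel_measurable_vec_lambda:
  fixes g :: "'n::finite \<Rightarrow> 'a \<Rightarrow> real"
  assumes "\<And>i. g i \<in> borel_measurable M"
  shows "(\<lambda>x. \<chi> i. g i x) \<in> borel_measurable M"
proof (rule iffD2[OF borel_measurable_euclidean_space], intro ballI)
  fix b :: "real^'n" assume "b \<in> Basis"
  then obtain j where b: "b = axis j 1" by (auto simp: Basis_vec_def)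
  have "(\<lambda>x. (\<chi> i. g i x) \<bullet> b) = g j" unfolding b by (simp add: inner_axis fun_eq_iff)
  then show "(\<lambda>x. (\<chi> i. g i x) \<bullet> b) \<in> borel_measurable M" using assms by simp
qed

definition generated_sigma :: "'a measure \<Rightarrow> 'b measure \<Rightarrow> ('i \<Rightarrow> 'a \<Rightarrow> 'b) \<Rightarrow> 'i set \<Rightarrow> 'a measure" where
  "generated_sigma M N W K = sigma (space M) (\<Union>i\<in>K. {W i -` A \<inter> space M | A. A \<in> sets N})"

lemma space_generated_sigma [simp]: "space (generated_sigma M N W K) = space M"
  by (auto simp: generated_sigma_def space_measure_of_conv)

lemma sets_generated_sigma:
  "sets (generated_sigma M N W K) = sigma_sets (space M) (\<Union>i\<in>K. {W i -` A \<inter> space M | A. A \<in> sets N})"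
  unfolding generated_sigma_def by (rule sets_measure_of) auto

lemma measurable_generated_sigma:
  assumes "W i \<in> measurable M N" "i \<in> K"
  shows "W i \<in> measurable (generated_sigma M N W K) N"
proof (rule measurableI)
  fix x assume "x \<in> space (generated_sigma M N W K)"
  then show "W i x \<in> space N" using assms(1) by (auto dest: measurable_space)
next
  fix A assume "A \<in> sets N"
  then have "W i -` A \<inter> space M \<in> (\<Union>i\<in>K. {W i -` A \<inter> space M | A. A \<in> sets N})" using assms(2) by blast
  then show "W i -` A \<inter> space (generated_sigma M N W K) \<in> sets (generated_sigma M N W K)"
    by (auto simp: sets_generated_sigma)
qed

lemma subalgebra_generated_sigma:
  assumes "\<And>i. i \<in> K \<Longrightarrow> W i \<in> measurable M N"
  shows "subalgebra M (generated_sigma M N W K)"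
proof -
  have "(\<Union>i\<in>K. {W i -` A \<inter> space M | A. A \<in> sets N}) \<subseteq> sets M" using assms by auto
  then show ?thesis
    by (auto simp: subalgebra_def sets_generated_sigma sets.sigma_sets_subset)
qed

lemma (in prob_space) indep_set_generated_sigma:
  fixes W :: "'i \<Rightarrow> 'a \<Rightarrow> 'w"
  assumes indep: "indep_vars (\<lambda>_. N) W UNIV" and disjoint: "K1 \<inter> K2 = {}"
    and Y1: "Y1 \<in> measurable (generated_sigma M N W K1) M1"
    and Y2: "Y2 \<in> measurable (generated_sigma M N W K2) M2"
  shows "indep_set (sigma_sets (space M) {Y1 -` A \<inter> space M |A. A \<in> sets M1})
    (sigma_sets (space M) {Y2 -` A \<inter> space M |A. A \<in> sets M2})"
proof -
  define E where "E i = {W i -` A \<inter> space M | A. A \<in> sets N}" for i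
  define I where "I b = (if b then K1 else K2)" for b
  have "indep_sets E UNIV" using indep unfolding indep_vars_def2 E_def by auto
  then have "indep_sets E (\<Union>b. I b)" by (rule indep_sets_mono_index[rotated]) simp
  moreover have "Int_stable (E i)" for i
    unfolding E_def
  proof (safe intro!: Int_stableI)
    fix A B assume "A \<in> sets N" "B \<in> sets N"
    then show "\<exists>C. (W i -` A \<inter> space M) \<inter> (W i -` B \<inter> space M) = W i -` C \<inter> space M \<and> C \<in> sets N"
      by (intro exI[of _ "A \<inter> B"]) auto
  qed
  moreover have "disjoint_family_on I UNIV"
    using disjoint by (auto simp: disjoint_family_on_def I_def)
  ultimately have collect: "indep_sets (\<lambda>b. sigma_sets (space M) (\<Union>i\<in>I b. E i)) UNIV"
    by (rule indep_sets_collect_sigma)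
  have generated: "sigma_sets (space M) {Y -` A \<inter> space M |A. A \<in> sets M'} \<subseteq> sigma_sets (space M) (\<Union>i\<in>K. E i)"
    if "Y \<in> measurable (generated_sigma M N W K) M'" for Y M' K
  proof (rule sigma_sets_mono, safe)
    fix A assume "A \<in> sets M'"
    then have "Y -` A \<inter> space M \<in> sets (generated_sigma M N W K)"
      using measurable_sets[OF that] by simp
    then show "Y -` A \<inter> space M \<in> sigma_sets (space M) (\<Union>i\<in>K. E i)"
      by (simp add: sets_generated_sigma E_def)
  qed
  show ?thesis
    unfolding indep_set_def
    by (rule indep_sets_mono_sets[OF collect])
       (use generated[OF Y1] generated[OF Y2] in \<open>auto simp: I_def split: bool.split\<close>)
qed

lemma measurable_generated_sigmaD:
  assumes "Y \<in> measurable (generated_sigma M N W K) M'" "\<And>i. i \<in> K \<Longrightarrow> W i \<in> measurable M N"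
  shows "Y \<in> measurable M M'"
  using measurable_from_subalg[OF subalgebra_generated_sigma] assms by blast

lemma (in prob_space) distr_pair_generated_sigma:
  fixes W :: "'i \<Rightarrow> 'a \<Rightarrow> 'w"
  assumes indep: "indep_vars (\<lambda>_. N) W UNIV" and disjoint: "K1 \<inter> K2 = {}"
    and Y1: "Y1 \<in> measurable (generated_sigma M N W K1) M1"
    and Y2: "Y2 \<in> measurable (generated_sigma M N W K2) M2"
  shows "distr M M1 Y1 \<Otimes>\<^sub>M distr M M2 Y2 = distr M (M1 \<Otimes>\<^sub>M M2) (\<lambda>\<omega>. (Y1 \<omega>, Y2 \<omega>))"
proof -
  have product: "prob ((Y1 -` A \<inter> space M) \<inter> (Y2 -` B \<inter> space M))
      = prob (Y1 -` A \<inter> space M) * prob (Y2 -` B \<inter> space M)" if "A \<in> sets M1" "B \<in> sets M2" for A B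
    using indep_set_generated_sigma[OF assms] that unfolding indep_sets2_eq
    by (blast intro: sigma_sets.Basic)
  have W: "W i \<in> measurable M N" for i using indep by (auto simp: indep_vars_def)
  have Y1': "Y1 \<in> measurable M M1" and Y2': "Y2 \<in> measurable M M2"
    using measurable_generated_sigmaD W Y1 Y2 by blast+
  interpret Y1: prob_space "distr M M1 Y1" using Y1' by (rule prob_space_distr)
  interpret Y2: prob_space "distr M M2 Y2" using Y2' by (rule prob_space_distr)
  interpret Y12: pair_prob_space "distr M M1 Y1" "distr M M2 Y2" ..
  show ?thesis
  proof (rule pair_measure_eqI)
    fix A B assume A: "A \<in> sets (distr M M1 Y1)" and B: "B \<in> sets (distr M M2 Y2)"
    have "emeasure (distr M (M1 \<Otimes>\<^sub>M M2) (\<lambda>\<omega>. (Y1 \<omega>, Y2 \<omega>))) (A \<times> B)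
        = emeasure M ((Y1 -` A \<inter> space M) \<inter> (Y2 -` B \<inter> space M))"
      using A B Y1' Y2' by (subst emeasure_distr) (auto intro!: arg_cong2[where f=emeasure])
    also have "\<dots> = emeasure (distr M M1 Y1) A * emeasure (distr M M2 Y2) B"
      using A B Y1' Y2' product[of A B] by (simp add: emeasure_distr emeasure_eq_measure ennreal_mult)
    finally show "emeasure (distr M M1 Y1) A * emeasure (distr M M2 Y2) B
        = emeasure (distr M (M1 \<Otimes>\<^sub>M M2) (\<lambda>\<omega>. (Y1 \<omega>, Y2 \<omega>))) (A \<times> B)" by simp
  qed (simp_all add: Y1.sigma_finite_measure_axioms Y2.sigma_finite_measure_axioms)
qed

lemma (in prob_space) nn_integral_product_distr:
  assumes X: "X \<in> measurable M S" and Y: "Y \<in> measurable M T"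
    and joint: "distr M S X \<Otimes>\<^sub>M distr M T Y = distr M (S \<Otimes>\<^sub>M T) (\<lambda>\<omega>. (X \<omega>, Y \<omega>))"
    and f: "f \<in> borel_measurable (S \<Otimes>\<^sub>M T)"
  shows "(\<integral>\<^sup>+\<omega>. f (X \<omega>, Y \<omega>) \<partial>M) = (\<integral>\<^sup>+\<omega>. (\<integral>\<^sup>+y. f (X \<omega>, y) \<partial>distr M T Y) \<partial>M)"
proof -
  interpret TY: prob_space "distr M T Y" using Y by (rule prob_space_distr)
  have f': "f \<in> borel_measurable (distr M S X \<Otimes>\<^sub>M distr M T Y)"
    using f by (simp add: joint)
  have "(\<integral>\<^sup>+\<omega>. f (X \<omega>, Y \<omega>) \<partial>M) = (\<integral>\<^sup>+p. f p \<partial>(distr M S X \<Otimes>\<^sub>M distr M T Y))"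
    using f X Y by (simp add: joint nn_integral_distr)
  also have "\<dots> = (\<integral>\<^sup>+x. (\<integral>\<^sup>+y. f (x, y) \<partial>distr M T Y) \<partial>distr M S X)"
    by (rule TY.nn_integral_fst[symmetric, OF f'])
  also have "\<dots> = (\<integral>\<^sup>+\<omega>. (\<integral>\<^sup>+y. f (X \<omega>, y) \<partial>distr M T Y) \<partial>M)"
    using TY.borel_measurable_nn_integral_fst[OF f'] X by (simp add: nn_integral_distr)
  finally show ?thesis .
qed

lemma distr_pair_snd_prob:
  assumes "prob_space M" "prob_space N"
  shows "distr (M \<Otimes>\<^sub>M N) N snd = N"
proof (intro measure_eqI)
  interpret M: prob_space M by fact
  interpret N: prob_space N by fact
  interpret pair_prob_space M N ..
  fix A assume A: "A \<in> sets (distr (M \<Otimes>\<^sub>M N) N snd)"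
  then have "emeasure (distr (M \<Otimes>\<^sub>M N) N snd) A = emeasure (M \<Otimes>\<^sub>M N) (space M \<times> A)"
    by (auto simp: emeasure_distr space_pair_measure dest: sets.sets_into_space
             intro!: arg_cong2[where f=emeasure])
  with A show "emeasure (distr (M \<Otimes>\<^sub>M N) N snd) A = emeasure N A"
    by (simp add: N.emeasure_pair_measure_Times M.emeasure_space_1)
qed simp

lemma AE_le_of_nn_integral_indicator_le:
  fixes g :: "'a \<Rightarrow> ennreal"
  assumes "finite_measure M" "g \<in> borel_measurable M" "m < \<infinity>"
    and le: "(\<integral>\<^sup>+\<omega>. indicator {\<omega>\<in>space M. m < g \<omega>} \<omega> * g \<omega> \<partial>M)
           \<le> (\<integral>\<^sup>+\<omega>. indicator {\<omega>\<in>space M. m < g \<omega>} \<omega> * m \<partial>M)"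
  shows "AE \<omega> in M. g \<omega> \<le> m"
proof -
  interpret finite_measure M by fact
  define B where "B = {\<omega>\<in>space M. m < g \<omega>}"
  have B: "B \<in> sets M" using assms(2) unfolding B_def by measurable
  have "emeasure M B = 0"
  proof (rule ccontr)
    assume pos: "emeasure M B \<noteq> 0"
    have "\<not> (AE \<omega> in M. indicator B \<omega> * g \<omega> \<le> indicator B \<omega> * m)"
    proof
      assume "AE \<omega> in M. indicator B \<omega> * g \<omega> \<le> indicator B \<omega> * m"
      then have "AE \<omega> in M. \<omega> \<notin> B" by eventually_elim (auto simp: B_def indicator_def)
      moreover have "{\<omega> \<in> space M. \<not> \<omega> \<notin> B} = B" using sets.sets_into_space[OF B] by auto
      ultimately show False using pos AE_iff_measurable[OF B, of "\<lambda>\<omega>. \<omega> \<notin> B"] by simp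
    qed
    moreover have "(\<integral>\<^sup>+\<omega>. indicator B \<omega> * m \<partial>M) \<noteq> \<infinity>"
      using B assms(3) by (simp add: nn_integral_cmult_indicator mult.commute ennreal_mult_eq_top_iff)
    ultimately have "(\<integral>\<^sup>+\<omega>. indicator B \<omega> * m \<partial>M) < (\<integral>\<^sup>+\<omega>. indicator B \<omega> * g \<omega> \<partial>M)"
      using B assms(2) by (intro nn_integral_less) (auto simp: B_def indicator_def intro!: AE_I2)
    then show False using le unfolding B_def by simp
  qed
  then show ?thesis using B by (auto simp: B_def not_le intro!: AE_I'[of B])
qed

lemma (in prob_space) prob_ge_le_exp_moment:
  assumes "d \<in> borel_measurable M" "0 \<le> \<theta>" "0 \<le> B"
    and moment: "(\<integral>\<^sup>+\<omega>. ennreal (exp (\<theta> * d \<omega>)) \<partial>M) \<le> ennreal B"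
  shows "prob {\<omega>\<in>space M. z \<le> d \<omega>} \<le> B * exp (- (\<theta> * z))"
proof -
  have "emeasure M {\<omega>\<in>space M. z \<le> d \<omega>} = (\<integral>\<^sup>+\<omega>. indicator {\<omega>\<in>space M. z \<le> d \<omega>} \<omega> \<partial>M)"
    using assms(1) by simp
  also have "\<dots> \<le> (\<integral>\<^sup>+\<omega>. ennreal (exp (- (\<theta> * z))) * ennreal (exp (\<theta> * d \<omega>)) \<partial>M)"
  proof (rule nn_integral_mono)
    fix \<omega>
    have "z \<le> d \<omega> \<Longrightarrow> 1 \<le> exp (- (\<theta> * z)) * exp (\<theta> * d \<omega>)"
      using mult_left_mono[of z "d \<omega>" \<theta>] assms(2) by (simp flip: exp_add)
    then show "indicator {\<omega>\<in>space M. z \<le> d \<omega>} \<omega> \<le> ennreal (exp (- (\<theta> * z))) * ennreal (exp (\<theta> * d \<omega>))"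
      by (auto simp: indicator_def ennreal_mult[symmetric] ennreal_leI simp del: ennreal_mult)
  qed
  also have "\<dots> = ennreal (exp (- (\<theta> * z))) * (\<integral>\<^sup>+\<omega>. ennreal (exp (\<theta> * d \<omega>)) \<partial>M)"
    using assms(1) by (intro nn_integral_cmult) measurable
  also have "\<dots> \<le> ennreal (exp (- (\<theta> * z))) * ennreal B" by (rule mult_left_mono[OF moment]) simp
  also have "\<dots> = ennreal (B * exp (- (\<theta> * z)))" using assms(3) by (simp add: ennreal_mult mult.commute)
  finally show ?thesis using assms(3) by (simp add: emeasure_eq_measure)
qed

lemma (in prob_space) expectation_le_exp_moment:
  assumes "integrable M d" "0 < \<theta>" "0 \<le> B"
    and moment: "(\<integral>\<^sup>+\<omega>. ennreal (exp (\<theta> * d \<omega>)) \<partial>M) \<le> ennreal B"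
  shows "expectation d \<le> B / \<theta>"
proof -
  have exp_integrable: "integrable M (\<lambda>\<omega>. exp (\<theta> * d \<omega>))"
    using assms(1) moment by (intro integrableI_nonneg) (auto simp: top.not_eq_extremum intro: le_less_trans)
  have "expectation d \<le> expectation (\<lambda>\<omega>. exp (\<theta> * d \<omega>) / \<theta>)"
    using exp_integrable assms(1,2) le_exp_div[OF assms(2)] by (intro integral_mono) auto
  also have "\<dots> = expectation (\<lambda>\<omega>. exp (\<theta> * d \<omega>)) / \<theta>" by simp
  also have "expectation (\<lambda>\<omega>. exp (\<theta> * d \<omega>)) \<le> B"
  proof -
    have "ennreal (expectation (\<lambda>\<omega>. exp (\<theta> * d \<omega>))) \<le> ennreal B"
      using exp_integrable moment by (simp add: nn_integral_eq_integral)
    then show ?thesis using assms(3) by (simp add: ennreal_le_iff)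
  qed
  finally show ?thesis using assms(2) by (simp add: divide_right_mono)
qed

lemma (in prob_space) tail_bound_of_exp_moment:
  fixes d :: "nat \<Rightarrow> 'a \<Rightarrow> real" and \<theta> :: "nat \<Rightarrow> real"
  assumes d: "\<And>t. d t \<in> borel_measurable M" "\<And>t \<omega>. 0 \<le> d t \<omega>" "\<And>t \<omega>. d t \<omega> \<le> R"
    and \<gamma>: "0 \<le> \<gamma>" "\<gamma> \<le> 1" and I: "0 < I" "\<And>t. I * tpow t \<gamma> \<le> \<theta> (Suc t)"
    and B: "0 \<le> B" "\<And>t. T0 \<le> t \<Longrightarrow> (\<integral>\<^sup>+\<omega>. ennreal (exp (\<theta> t * d t \<omega>)) \<partial>M) \<le> ennreal B"
  shows "\<exists>J>0. \<forall>t z. 0 \<le> z \<longrightarrow> prob {\<omega>\<in>space M. z \<le> d (Suc t) \<omega>} \<le> J * exp (- I * tpow t \<gamma> * z)"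
proof (intro exI conjI allI impI)
  define J where "J = max B (exp (I * real T0 * R))"
  show "0 < J" by (simp add: J_def less_max_iff_disj)
  fix t :: nat and z :: real assume z: "0 \<le> z"
  have "0 \<le> \<theta> (Suc t)" using I tpow_bounds[OF \<gamma>, of t] by (smt (verit) mult_nonneg_nonneg)
  have "I * tpow t \<gamma> * z \<le> \<theta> (Suc t) * z" using I(2) z by (rule mult_right_mono)
  then have exp_le: "exp (- (\<theta> (Suc t) * z)) \<le> exp (- I * tpow t \<gamma> * z)" by simp
  show "prob {\<omega>\<in>space M. z \<le> d (Suc t) \<omega>} \<le> J * exp (- I * tpow t \<gamma> * z)"
  proof (cases "T0 \<le> Suc t")
    case True
    have "prob {\<omega>\<in>space M. z \<le> d (Suc t) \<omega>} \<le> B * exp (- (\<theta> (Suc t) * z))"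
      using prob_ge_le_exp_moment[OF d(1) \<open>0 \<le> \<theta> (Suc t)\<close> B(1) B(2)[OF True]] .
    also have "\<dots> \<le> J * exp (- I * tpow t \<gamma> * z)"
      using exp_le B(1) by (intro mult_mono) (auto simp: J_def)
    finally show ?thesis .
  next
    case False
    show ?thesis
    proof (cases "z \<le> R")
      case True
      have "tpow t \<gamma> * z \<le> real T0 * R"
        using tpow_bounds[OF \<gamma>, of t] False True z by (intro mult_mono) auto
      then have "1 \<le> exp (I * real T0 * R) * exp (- I * tpow t \<gamma> * z)"
        using I(1) mult_left_mono[of "tpow t \<gamma> * z" "real T0 * R" I]
        by (simp add: algebra_simps flip: exp_add)
      also have "\<dots> \<le> J * exp (- I * tpow t \<gamma> * z)" by (intro mult_right_mono) (auto simp: J_def)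
      finally show ?thesis by (rule order_trans[OF prob_le_1])
    next
      case False
      then have "{\<omega>\<in>space M. z \<le> d (Suc t) \<omega>} = {}" using d(3) by (auto intro: order_trans)
      then show ?thesis using \<open>0 < J\<close> by (simp only:) simp
    qed
  qed
qed

lemma (in prob_space) expectation_bound_of_exp_moment:
  fixes d :: "nat \<Rightarrow> 'a \<Rightarrow> real" and \<theta> :: "nat \<Rightarrow> real"
  assumes d: "\<And>t. d t \<in> borel_measurable M" "\<And>t \<omega>. 0 \<le> d t \<omega>" "\<And>t \<omega>. d t \<omega> \<le> R"
    and \<gamma>: "0 \<le> \<gamma>" "\<gamma> \<le> 1" and I: "0 < I" "\<And>t. I * tpow t \<gamma> \<le> \<theta> (Suc t)"
    and B: "0 \<le> B" "\<And>t. T0 \<le> t \<Longrightarrow> (\<integral>\<^sup>+\<omega>. ennreal (exp (\<theta> t * d t \<omega>)) \<partial>M) \<le> ennreal B"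
  shows "\<exists>K>0. \<forall>t\<ge>1. expectation (d (Suc t)) \<le> K / real t powr \<gamma>"
proof (intro exI conjI allI impI)
  define K where "K = max (B / I) (R * real T0) + 1"
  have R: "0 \<le> R" using d(2,3) order_trans by blast
  show "0 < K" using B I R by (simp add: K_def add_nonneg_pos le_max_iff_disj)
  fix t :: nat assume t: "1 \<le> t"
  have tpos: "0 < real t powr \<gamma>" using t by simp
  have integrable: "integrable M (d (Suc t))"
    using d by (intro integrable_const_bound[where B=R]) auto
  show "expectation (d (Suc t)) \<le> K / real t powr \<gamma>"
  proof (cases "T0 \<le> Suc t")
    case True
    have "I * real t powr \<gamma> \<le> \<theta> (Suc t)" using I(2)[of t] t by (simp add: tpow_def)
    then have "0 < \<theta> (Suc t)" using I(1) tpos by (smt (verit) mult_pos_pos)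
    then have "expectation (d (Suc t)) \<le> B / \<theta> (Suc t)"
      by (rule expectation_le_exp_moment[OF integrable _ B(1) B(2)[OF True]])
    also have "\<dots> \<le> B / (I * real t powr \<gamma>)"
      using \<open>I * real t powr \<gamma> \<le> \<theta> (Suc t)\<close> \<open>0 < \<theta> (Suc t)\<close> I(1) tpos B(1)
      by (intro divide_left_mono) (auto intro!: mult_pos_pos)
    also have "\<dots> = (B / I) / real t powr \<gamma>" by simp
    also have "\<dots> \<le> K / real t powr \<gamma>" using tpos by (intro divide_right_mono) (auto simp: K_def)
    finally show ?thesis .
  next
    case False
    have "expectation (d (Suc t)) \<le> expectation (\<lambda>_. R)"
      using d integrable by (intro integral_mono) auto
    also have "\<dots> = R" by (simp add: prob_space)
    also have "\<dots> \<le> R * real T0 / real t powr \<gamma>"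
    proof -
      have "real t powr \<gamma> \<le> real T0" using powr_mono[of \<gamma> 1 "real t"] \<gamma> t False by simp
      then have "R * real t powr \<gamma> \<le> R * real T0" using R by (rule mult_left_mono)
      then show ?thesis using tpos by (simp add: field_simps)
    qed
    also have "\<dots> \<le> K / real t powr \<gamma>" using tpos by (intro divide_right_mono) (auto simp: K_def)
    finally show ?thesis .
  qed
qed

section \<open>The Kiefer-Wolfowitz iteration\<close>

locale kw_process =
  fixes X :: "(real^'n) set" and P :: "'o measure" and N D :: "'w measure"
    and l :: "real^'n \<Rightarrow> 'w \<Rightarrow> real" and Wp Wm :: "nat \<Rightarrow> 'o \<Rightarrow> 'w"
    and x0 :: "real^'n" and \<nu> :: real and \<alpha> :: "nat \<Rightarrow> real"
  assumes X: "X \<noteq> {}" "closed X" "convex X"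
    and P: "prob_space P"
    and D: "prob_space D" "sets D = sets N"
    and W_measurable: "\<And>t. Wp t \<in> measurable P N" "\<And>t. Wm t \<in> measurable P N"
    and W_distr: "\<And>t. distr P N (Wp t) = D" "\<And>t. distr P N (Wm t) = D"
    and W_indep: "prob_space.indep_vars P (\<lambda>_. N)
                   (\<lambda>i. case i of Inl t \<Rightarrow> Wp t | Inr t \<Rightarrow> Wm t) (UNIV :: (nat + nat) set)"
    and l_measurable: "(\<lambda>(y, w). l y w) \<in> borel_measurable (borel \<Otimes>\<^sub>M N)"
    and x0: "x0 \<in> X"
begin

interpretation P: prob_space P by (fact P)

abbreviation "xt t \<equiv> kw_iter X l \<nu> \<alpha> x0 Wp Wm t"

abbreviation "past t \<equiv> Inl ` {..<t} \<union> Inr ` {..<t}"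

lemma noise_measurable: "case_sum Wp Wm i \<in> measurable P N"
  by (cases i) (auto simp: W_measurable)

lemma noise_pair_measurable [measurable]: "(\<lambda>\<omega>. (Wp t \<omega>, Wm t \<omega>)) \<in> measurable P (N \<Otimes>\<^sub>M N)"
  using W_measurable by (auto intro!: measurable_Pair)

lemma noise_indep: "prob_space.indep_vars P (\<lambda>_. N) (case_sum Wp Wm) UNIV"
  using W_indep by simp

lemma kw_dir_measurable:
  "(\<lambda>p. kw_dir l \<nu> (fst p) (fst (snd p)) (snd (snd p))) \<in> borel_measurable (borel \<Otimes>\<^sub>M (N \<Otimes>\<^sub>M N))"
proof -
  have "(\<lambda>p::(real^'n) \<times> ('w \<times> 'w). l (fst p + s *\<^sub>R axis i 1) (proj (snd p)))
      \<in> borel_measurable (borel \<Otimes>\<^sub>M (N \<Otimes>\<^sub>M N))"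
    if "proj \<in> measurable (N \<Otimes>\<^sub>M N) N" for s i proj
    using measurable_compose[OF measurable_snd that]
    by (intro measurable_Pair_compose_split[OF l_measurable]) measurable
  then have "(\<lambda>p::(real^'n) \<times> ('w \<times> 'w). lvec l (fst p) s (proj (snd p)))
      \<in> borel_measurable (borel \<Otimes>\<^sub>M (N \<Otimes>\<^sub>M N))"
    if "proj \<in> measurable (N \<Otimes>\<^sub>M N) N" for s proj
    using that unfolding lvec_def by (intro borel_measurable_vec_lambda)
  from this[OF measurable_fst] this[OF measurable_snd] show ?thesis
    unfolding kw_dir_def by measurable
qed

lemma kw_step_measurable:
  "(\<lambda>p. closest_point X (fst p - a *\<^sub>R kw_dir l \<nu> (fst p) (fst (snd p)) (snd (snd p))))
    \<in> borel_measurable (borel \<Otimes>\<^sub>M (N \<Otimes>\<^sub>M N))"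
  using kw_dir_measurable
  by (intro borel_measurable_continuous_on[OF continuous_on_closest_point[OF X(3,2,1)]]) measurable

lemma kw_iter_measurable:
  assumes "\<And>s. s < t \<Longrightarrow> Wp s \<in> measurable F N" "\<And>s. s < t \<Longrightarrow> Wm s \<in> measurable F N"
  shows "xt t \<in> borel_measurable F"
  using assms
proof (induction t)
  case 0
  have "xt 0 = (\<lambda>_. x0)" by (rule ext) simp
  then show ?case by simp
next
  case (Suc t)
  then have "(\<lambda>\<omega>. (xt t \<omega>, (Wp t \<omega>, Wm t \<omega>))) \<in> measurable F (borel \<Otimes>\<^sub>M (N \<Otimes>\<^sub>M N))"
    by (auto intro!: measurable_Pair)
  from measurable_compose[OF this kw_step_measurable] show ?case by simp
qed

lemma kw_iter_borel_measurable [measurable]: "xt t \<in> borel_measurable P"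
  by (rule kw_iter_measurable) (auto simp: W_measurable)

lemma kw_iter_in_X: "xt t \<omega> \<in> X"
  by (cases t) (auto simp: x0 closest_point_in_set X)

lemma noise_measurable_generated:
  "Inl s \<in> K \<Longrightarrow> Wp s \<in> measurable (generated_sigma P N (case_sum Wp Wm) K) N"
  "Inr s \<in> K \<Longrightarrow> Wm s \<in> measurable (generated_sigma P N (case_sum Wp Wm) K) N"
  using measurable_generated_sigma[of "case_sum Wp Wm" "Inl s" P N K]
    measurable_generated_sigma[of "case_sum Wp Wm" "Inr s" P N K] noise_measurable
  by auto

lemma kw_filt_eq: "kw_filt P N Wp Wm t = generated_sigma P N (case_sum Wp Wm) (past t)"
  unfolding kw_filt_def generated_sigma_def by (rule arg_cong[where f="sigma (space P)"]) auto

lemma kw_iter_filt_measurable: "xt t \<in> borel_measurable (kw_filt P N Wp Wm t)"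
  unfolding kw_filt_eq
  by (rule kw_iter_measurable) (auto intro: noise_measurable_generated)

lemma subalgebra_kw_filt: "subalgebra P (kw_filt P N Wp Wm t)"
  unfolding kw_filt_eq by (intro subalgebra_generated_sigma noise_measurable)

lemma distr_iter_noise:
  "distr P borel (xt t) \<Otimes>\<^sub>M distr P (N \<Otimes>\<^sub>M N) (\<lambda>\<omega>. (Wp t \<omega>, Wm t \<omega>))
    = distr P (borel \<Otimes>\<^sub>M (N \<Otimes>\<^sub>M N)) (\<lambda>\<omega>. (xt t \<omega>, (Wp t \<omega>, Wm t \<omega>)))"
proof (rule P.distr_pair_generated_sigma[OF noise_indep])
  show "past t \<inter> {Inl t, Inr t} = {}" by auto
  show "xt t \<in> borel_measurable (generated_sigma P N (case_sum Wp Wm) (past t))"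
    using kw_iter_filt_measurable kw_filt_eq by simp
  show "(\<lambda>\<omega>. (Wp t \<omega>, Wm t \<omega>)) \<in> measurable (generated_sigma P N (case_sum Wp Wm) {Inl t, Inr t}) (N \<Otimes>\<^sub>M N)"
    by (auto intro!: measurable_Pair noise_measurable_generated)
qed

lemma distr_noise_pair: "distr P (N \<Otimes>\<^sub>M N) (\<lambda>\<omega>. (Wp t \<omega>, Wm t \<omega>)) = D \<Otimes>\<^sub>M D"
proof -
  have "distr P N (Wp t) \<Otimes>\<^sub>M distr P N (Wm t) = distr P (N \<Otimes>\<^sub>M N) (\<lambda>\<omega>. (Wp t \<omega>, Wm t \<omega>))"
    by (intro P.distr_pair_generated_sigma[OF noise_indep, of "{Inl t}" "{Inr t}"]
        noise_measurable_generated) auto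
  then show ?thesis using W_distr by simp
qed

lemma nn_integral_frozen:
  assumes "f \<in> borel_measurable (borel \<Otimes>\<^sub>M (N \<Otimes>\<^sub>M N))"
  shows "(\<integral>\<^sup>+\<omega>. f (xt t \<omega>, (Wp t \<omega>, Wm t \<omega>)) \<partial>P) = (\<integral>\<^sup>+\<omega>. (\<integral>\<^sup>+z. f (xt t \<omega>, z) \<partial>(D \<Otimes>\<^sub>M D)) \<partial>P)"
  using P.nn_integral_product_distr[OF kw_iter_borel_measurable noise_pair_measurable distr_iter_noise assms]
  by (simp add: distr_noise_pair)

lemma kw_dir_measurable_pair_D:
  "(\<lambda>p. kw_dir l \<nu> (fst p) (fst (snd p)) (snd (snd p))) \<in> borel_measurable (borel \<Otimes>\<^sub>M (D \<Otimes>\<^sub>M D))"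
proof -
  have sets: "sets (borel \<Otimes>\<^sub>M (D \<Otimes>\<^sub>M D)) = sets (borel \<Otimes>\<^sub>M (N \<Otimes>\<^sub>M N))"
    using D(2) by (intro sets_pair_measure_cong) auto
  show ?thesis by (subst measurable_cong_sets[OF sets refl]) (rule kw_dir_measurable)
qed

lemma kw_dir_frozen_measurable: "(\<lambda>z. kw_dir l \<nu> x (fst z) (snd z)) \<in> borel_measurable (D \<Otimes>\<^sub>M D)"
proof -
  have "(\<lambda>p. kw_dir l \<nu> (fst p) (fst (snd p)) (snd (snd p))) \<circ> (\<lambda>z. (x, z)) \<in> borel_measurable (D \<Otimes>\<^sub>M D)"
    by (rule measurable_comp[OF _ kw_dir_measurable_pair_D]) simp
  then show ?thesis by (simp add: o_def)
qed

definition dir_mgf :: "real \<Rightarrow> real^'n \<Rightarrow> ennreal" where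
  "dir_mgf lam x = (\<integral>\<^sup>+z. ennreal (exp (lam * norm (kw_dir l \<nu> x (fst z) (snd z)))) \<partial>(D \<Otimes>\<^sub>M D))"

lemma dir_mgf_measurable [measurable]: "dir_mgf lam \<in> borel_measurable borel"
proof -
  interpret DD: prob_space "D \<Otimes>\<^sub>M D" using D(1) by (intro prob_space_pair)
  have "(\<lambda>p. ennreal (exp (lam * norm (kw_dir l \<nu> (fst p) (fst (snd p)) (snd (snd p))))))
      \<in> borel_measurable (borel \<Otimes>\<^sub>M (D \<Otimes>\<^sub>M D))"
    using kw_dir_measurable_pair_D by measurable
  from DD.borel_measurable_nn_integral_fst[OF this] show ?thesis
    by (simp add: dir_mgf_def[abs_def])
qed

lemma nn_integral_indicator_dir_mgf:
  assumes "A \<in> sets borel"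
  shows "(\<integral>\<^sup>+\<omega>. indicator A (xt t \<omega>) * ennreal (exp (lam * norm (kw_dir l \<nu> (xt t \<omega>) (Wp t \<omega>) (Wm t \<omega>)))) \<partial>P)
    = (\<integral>\<^sup>+\<omega>. indicator A (xt t \<omega>) * dir_mgf lam (xt t \<omega>) \<partial>P)"
proof -
  have "(\<lambda>p. indicator A (fst p) * ennreal (exp (lam * norm (kw_dir l \<nu> (fst p) (fst (snd p)) (snd (snd p))))))
      \<in> borel_measurable (borel \<Otimes>\<^sub>M (N \<Otimes>\<^sub>M N))"
    using kw_dir_measurable assms by measurable
  from nn_integral_frozen[OF this, of t] show ?thesis
    using kw_dir_frozen_measurable by (simp add: dir_mgf_def nn_integral_cmult)
qed

text \<open>Since \<open>x\<^sub>t\<close> is \<open>F\<^sub>t\<close>-measurable and the fresh noise is independent of \<open>F\<^sub>t\<close>, the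
  conditional moment in (D2) is \<open>dir_mgf lam (x\<^sub>t)\<close>; testing against the \<open>F\<^sub>t\<close>-event where
  \<open>dir_mgf\<close> exceeds \<open>M\<close> suffices for the inequality.\<close>

lemma dir_mgf_AE_le:
  assumes "AE \<omega> in P. nn_cond_exp P (kw_filt P N Wp Wm t)
      (\<lambda>\<omega>. ennreal (exp (lam * norm (kw_dir l \<nu> (xt t \<omega>) (Wp t \<omega>) (Wm t \<omega>))))) \<omega> \<le> ennreal M"
  shows "AE \<omega> in P. dir_mgf lam (xt t \<omega>) \<le> ennreal M"
proof (rule AE_le_of_nn_integral_indicator_le)
  define F where "F = kw_filt P N Wp Wm t"
  define B where "B = {\<omega>\<in>space P. ennreal M < dir_mgf lam (xt t \<omega>)}"
  define g where "g \<omega> = ennreal (exp (lam * norm (kw_dir l \<nu> (xt t \<omega>) (Wp t \<omega>) (Wm t \<omega>))))" for \<omega>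
  have sub: "subalgebra P F" unfolding F_def by (rule subalgebra_kw_filt)
  then interpret sigma_finite_subalgebra P F
    by (intro finite_measure_subalgebra_is_sigma_finite)
       (simp add: finite_measure_subalgebra_def finite_measure_subalgebra_axioms_def P.finite_measure_axioms)
  have [measurable]: "(\<lambda>\<omega>. dir_mgf lam (xt t \<omega>)) \<in> borel_measurable F"
    using measurable_compose[OF kw_iter_filt_measurable dir_mgf_measurable] by (simp add: F_def)
  have "{\<omega>\<in>space F. ennreal M < dir_mgf lam (xt t \<omega>)} \<in> sets F" by measurable
  moreover have "space F = space P" using sub by (simp add: subalgebra_def)
  ultimately have B: "(\<lambda>\<omega>. indicator B \<omega> :: ennreal) \<in> borel_measurable F"
    unfolding B_def by simp
  have "(\<lambda>\<omega>. (xt t \<omega>, (Wp t \<omega>, Wm t \<omega>))) \<in> measurable P (borel \<Otimes>\<^sub>M (N \<Otimes>\<^sub>M N))" by measurable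
  from measurable_compose[OF this kw_dir_measurable]
  have [measurable]: "(\<lambda>\<omega>. kw_dir l \<nu> (xt t \<omega>) (Wp t \<omega>) (Wm t \<omega>)) \<in> borel_measurable P" by simp
  have g: "g \<in> borel_measurable P" unfolding g_def by measurable
  have "{x. ennreal M < dir_mgf lam x} \<in> sets borel" by measurable
  from nn_integral_indicator_dir_mgf[OF this, of t]
  have "(\<integral>\<^sup>+\<omega>. indicator {x. ennreal M < dir_mgf lam x} (xt t \<omega>) * g \<omega> \<partial>P)
      = (\<integral>\<^sup>+\<omega>. indicator {x. ennreal M < dir_mgf lam x} (xt t \<omega>) * dir_mgf lam (xt t \<omega>) \<partial>P)"
    by (simp add: g_def)
  moreover have "(\<integral>\<^sup>+\<omega>. indicator B \<omega> * h \<omega> \<partial>P)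
      = (\<integral>\<^sup>+\<omega>. indicator {x. ennreal M < dir_mgf lam x} (xt t \<omega>) * h \<omega> \<partial>P)" for h
    by (intro nn_integral_cong) (simp add: B_def indicator_def)
  ultimately have "(\<integral>\<^sup>+\<omega>. indicator B \<omega> * g \<omega> \<partial>P) = (\<integral>\<^sup>+\<omega>. indicator B \<omega> * dir_mgf lam (xt t \<omega>) \<partial>P)"
    by simp
  moreover have "(\<integral>\<^sup>+\<omega>. indicator B \<omega> * g \<omega> \<partial>P) = (\<integral>\<^sup>+\<omega>. indicator B \<omega> * nn_cond_exp P F g \<omega> \<partial>P)"
    using nn_cond_exp_intg[OF B g] by simp
  moreover have "(\<integral>\<^sup>+\<omega>. indicator B \<omega> * nn_cond_exp P F g \<omega> \<partial>P) \<le> (\<integral>\<^sup>+\<omega>. indicator B \<omega> * ennreal M \<partial>P)"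
    using assms unfolding F_def g_def
    by (intro nn_integral_mono_AE) (auto elim!: eventually_mono intro: mult_left_mono)
  ultimately show "(\<integral>\<^sup>+\<omega>. indicator {\<omega>\<in>space P. ennreal M < dir_mgf lam (xt t \<omega>)} \<omega> * dir_mgf lam (xt t \<omega>) \<partial>P)
      \<le> (\<integral>\<^sup>+\<omega>. indicator {\<omega>\<in>space P. ennreal M < dir_mgf lam (xt t \<omega>)} \<omega> * ennreal M \<partial>P)"
    by (simp add: B_def)
qed (use P.finite_measure_axioms in auto)

lemma integral_kw_dir_inner:
  assumes l_integrable: "\<And>y. integrable D (l y)"
  shows "(\<integral>z. kw_dir l \<nu> x (fst z) (snd z) \<bullet> v \<partial>(D \<Otimes>\<^sub>M D))
    = ((1 / (2 * \<nu>)) *\<^sub>R (\<chi> i. lmean D l (x + \<nu> *\<^sub>R axis i 1) - lmean D l (x - \<nu> *\<^sub>R axis i 1))) \<bullet> v"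
proof -
  interpret D: prob_space D by (fact D(1))
  have marginal: "integrable (D \<Otimes>\<^sub>M D) (\<lambda>z. f (\<pi> z))" "(\<integral>z. f (\<pi> z) \<partial>(D \<Otimes>\<^sub>M D)) = (\<integral>w. f w \<partial>D)"
    if "\<pi> \<in> measurable (D \<Otimes>\<^sub>M D) D" "distr (D \<Otimes>\<^sub>M D) D \<pi> = D" "integrable D f" for \<pi> and f :: "'w \<Rightarrow> real"
    using integrable_distr_eq[of \<pi> "D \<Otimes>\<^sub>M D" D f] integral_distr[of \<pi> "D \<Otimes>\<^sub>M D" D f] that by auto
  note fst = marginal[OF measurable_fst D.distr_pair_fst l_integrable]
  note snd = marginal[OF measurable_snd distr_pair_snd_prob[OF D(1) D(1)] l_integrable]
  define c where "c i = v $ i / (2 * \<nu>)" for i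
  have "(\<integral>z. kw_dir l \<nu> x (fst z) (snd z) \<bullet> v \<partial>(D \<Otimes>\<^sub>M D))
      = (\<integral>z. (\<Sum>i\<in>UNIV. c i * l (x + \<nu> *\<^sub>R axis i 1) (fst z) - c i * l (x - \<nu> *\<^sub>R axis i 1) (snd z)) \<partial>(D \<Otimes>\<^sub>M D))"
    by (simp add: kw_dir_def lvec_def inner_vec_def c_def algebra_simps sum_subtractf)
  also have "\<dots> = (\<Sum>i\<in>UNIV. c i * lmean D l (x + \<nu> *\<^sub>R axis i 1) - c i * lmean D l (x - \<nu> *\<^sub>R axis i 1))"
    using fst snd by (simp add: lmean_def)
  also have "\<dots> = ((1 / (2 * \<nu>)) *\<^sub>R (\<chi> i. lmean D l (x + \<nu> *\<^sub>R axis i 1) - lmean D l (x - \<nu> *\<^sub>R axis i 1))) \<bullet> v"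
    by (simp add: inner_vec_def c_def algebra_simps sum_subtractf)
  finally show ?thesis .
qed

lemma lyapunov_bound:
  fixes V :: "nat \<Rightarrow> real^'n \<Rightarrow> real"
  assumes V: "\<And>t. V t \<in> borel_measurable borel" "\<And>t x. 0 \<le> V t x"
    and moment: "\<And>t. AE \<omega> in P. dir_mgf lam (xt t \<omega>) \<le> ennreal M"
    and drift: "\<And>t x. t0 \<le> t \<Longrightarrow> x \<in> X \<Longrightarrow> dir_mgf lam x \<le> ennreal M \<Longrightarrow>
      (\<integral>\<^sup>+z. ennreal (V (Suc t) (closest_point X (x - \<alpha> t *\<^sub>R kw_dir l \<nu> x (fst z) (snd z)))) \<partial>(D \<Otimes>\<^sub>M D))
        \<le> ennreal (\<rho> * V t x + C)"
    and initial: "\<And>x. x \<in> X \<Longrightarrow> V t0 x \<le> B"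
    and B: "\<rho> * B + C \<le> B" "0 \<le> \<rho>" "0 \<le> C"
    and t: "t0 \<le> t"
  shows "(\<integral>\<^sup>+\<omega>. ennreal (V t (xt t \<omega>)) \<partial>P) \<le> ennreal B"
  using t
proof (induction t rule: dec_induct)
  case base
  have "(\<integral>\<^sup>+\<omega>. ennreal (V t0 (xt t0 \<omega>)) \<partial>P) \<le> (\<integral>\<^sup>+\<omega>. ennreal B \<partial>P)"
    using initial[OF kw_iter_in_X] by (intro nn_integral_mono ennreal_leI) auto
  then show ?case by (simp add: P.emeasure_space_1)
next
  case (step t)
  have "0 \<le> B" using initial[OF x0] V(2)[of t0 x0] by linarith
  define f where "f p = ennreal (V (Suc t) (closest_point X (fst p - \<alpha> t *\<^sub>R kw_dir l \<nu> (fst p) (fst (snd p)) (snd (snd p)))))" for p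
  have f: "f \<in> borel_measurable (borel \<Otimes>\<^sub>M (N \<Otimes>\<^sub>M N))"
    using measurable_compose[OF kw_step_measurable V(1)] unfolding f_def by measurable
  have "(\<integral>\<^sup>+\<omega>. ennreal (V (Suc t) (xt (Suc t) \<omega>)) \<partial>P) = (\<integral>\<^sup>+\<omega>. f (xt t \<omega>, (Wp t \<omega>, Wm t \<omega>)) \<partial>P)"
    by (simp add: f_def)
  also have "\<dots> = (\<integral>\<^sup>+\<omega>. (\<integral>\<^sup>+z. f (xt t \<omega>, z) \<partial>(D \<Otimes>\<^sub>M D)) \<partial>P)"
    by (rule nn_integral_frozen[OF f])
  also have "\<dots> \<le> (\<integral>\<^sup>+\<omega>. ennreal \<rho> * ennreal (V t (xt t \<omega>)) + ennreal C \<partial>P)"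
    using moment[of t]
    by (intro nn_integral_mono_AE)
       (auto elim!: eventually_mono dest!: drift[OF step.hyps(1) kw_iter_in_X]
             simp: f_def B V(2) ennreal_mult[symmetric] ennreal_plus[symmetric] simp del: ennreal_plus)
  also have "\<dots> = ennreal \<rho> * (\<integral>\<^sup>+\<omega>. ennreal (V t (xt t \<omega>)) \<partial>P) + ennreal C"
    using measurable_compose[OF kw_iter_borel_measurable V(1)]
    by (simp add: nn_integral_add nn_integral_cmult P.emeasure_space_1)
  also have "\<dots> \<le> ennreal \<rho> * ennreal B + ennreal C"
    using step.IH by (intro add_right_mono mult_left_mono) auto
  also have "\<dots> \<le> ennreal B"
    using B \<open>0 \<le> B\<close> by (simp add: ennreal_mult[symmetric] ennreal_plus[symmetric] del: ennreal_plus)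
  finally show ?case .
qed

end

section \<open>Convergence rates\<close>

locale kw_problem =
  kw_process X P N D l Wp Wm x0 \<nu> "\<lambda>t. a / (u + real t) powr \<gamma>"
  for X :: "(real^'n) set" and P :: "'o measure" and N D :: "'w measure"
    and l :: "real^'n \<Rightarrow> 'w \<Rightarrow> real" and Wp Wm :: "nat \<Rightarrow> 'o \<Rightarrow> 'w"
    and x0 :: "real^'n" and \<nu> a u \<gamma> :: real +
  fixes g :: "real^'n \<Rightarrow> real^'n" and \<kappa> c :: real
  assumes bounded: "bounded X"
    and l_integrable: "\<And>y. integrable D (l y)"
    and lipschitz: "\<exists>C. C-lipschitz_on X (lmean D l)"
    and step: "a > 0" "u > 0" "0 \<le> \<gamma>" "\<gamma> \<le> 1"
    and nu: "\<nu> > 0"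
    and D1: "\<kappa> > 0" "\<forall>y\<in>X. \<forall>ys\<in>{xs \<in> X. \<forall>y\<in>X. lmean D l xs \<le> lmean D l y}.
      dist y ys = infdist y {xs \<in> X. \<forall>y\<in>X. lmean D l xs \<le> lmean D l y}
        \<longrightarrow> g y \<bullet> (y - ys) \<ge> \<kappa> * norm (y - ys)"
    and D2: "\<exists>lam>0. \<exists>M::real. \<forall>t. AE \<omega> in P.
      nn_cond_exp P (kw_filt P N Wp Wm t)
        (\<lambda>\<omega>. ennreal (exp (lam * norm (kw_dir l \<nu> (xt t \<omega>) (Wp t \<omega>) (Wm t \<omega>))))) \<omega> \<le> ennreal M"
    and D3: "c > 0" "\<forall>y\<in>X. norm (g y - (1 / (2 * \<nu>)) *\<^sub>R
      (\<chi> i. lmean D l (y + \<nu> *\<^sub>R axis i 1) - lmean D l (y - \<nu> *\<^sub>R axis i 1))) \<le> c * \<nu>\<^sup>2"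
    and nu_small: "\<nu> \<le> sqrt (\<kappa> / (3 * c))"
begin

interpretation P: prob_space P by (fact P)

abbreviation "opt \<equiv> {xs \<in> X. \<forall>y\<in>X. lmean D l xs \<le> lmean D l y}"

lemma lmean_continuous: "continuous_on X (lmean D l)"
  using lipschitz by (auto intro: lipschitz_on_continuous_on)

lemma opt: "closed opt" "opt \<noteq> {}" "opt \<subseteq> X"
proof -
  have "compact X" using bounded X(2) by (simp add: compact_eq_bounded_closed)
  then show "closed opt" "opt \<noteq> {}"
    using closed_argmin argmin_nonempty X(1) lmean_continuous by blast+
qed auto

lemma lmean_measurable: "lmean D l \<in> borel_measurable borel"
proof -
  interpret D: prob_space D by (fact D(1))
  have sets: "sets (borel \<Otimes>\<^sub>M D) = sets (borel \<Otimes>\<^sub>M N)" using D(2) by (intro sets_pair_measure_cong) auto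
  have "(\<lambda>(x, y). l x y) \<in> borel_measurable (borel \<Otimes>\<^sub>M D)"
    by (subst measurable_cong_sets[OF sets refl]) (rule l_measurable)
  from D.borel_measurable_lebesgue_integral[OF this] show ?thesis
    by (simp add: lmean_def[abs_def])
qed

lemma kw_dir_drift:
  assumes "x \<in> X" "p \<in> opt" "dist x p = infdist x opt"
  shows "2 * \<kappa> / 3 * infdist x opt \<le> (\<integral>z. kw_dir l \<nu> x (fst z) (snd z) \<bullet> (x - p) \<partial>(D \<Otimes>\<^sub>M D))"
proof -
  define h where "h = (1 / (2 * \<nu>)) *\<^sub>R (\<chi> i. lmean D l (x + \<nu> *\<^sub>R axis i 1) - lmean D l (x - \<nu> *\<^sub>R axis i 1))"
  have "\<nu>\<^sup>2 \<le> \<kappa> / (3 * c)"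
    using nu_small nu D1(1) D3(1) real_sqrt_le_iff[of "\<nu>\<^sup>2"] by (simp add: real_le_rsqrt)
  then have "c * \<nu>\<^sup>2 \<le> \<kappa> / 3" using D3(1) by (simp add: field_simps)
  then have "norm (g x - h) \<le> \<kappa> / 3" using D3(2) assms(1) unfolding h_def by fastforce
  then have "(g x - h) \<bullet> (x - p) \<le> \<kappa> / 3 * norm (x - p)"
    using norm_cauchy_schwarz[of "g x - h" "x - p"] mult_right_mono[of _ "\<kappa> / 3" "norm (x - p)"]
    by (meson norm_ge_zero order_trans)
  moreover have "\<kappa> * norm (x - p) \<le> g x \<bullet> (x - p)" using D1(2) assms by blast
  ultimately have "2 * \<kappa> / 3 * norm (x - p) \<le> h \<bullet> (x - p)" by (simp add: inner_diff_left)
  then show ?thesis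
    using assms(3) integral_kw_dir_inner[OF l_integrable] by (simp add: h_def dist_norm)
qed

lemma infdist_opt_measurable [measurable]: "(\<lambda>\<omega>. infdist (xt t \<omega>) opt) \<in> borel_measurable P"
proof -
  have "(\<lambda>y. infdist y opt) \<in> borel_measurable borel"
    by (intro borel_measurable_continuous_onI continuous_intros)
  from measurable_compose[OF kw_iter_borel_measurable this] show ?thesis .
qed

lemma kw_one_step_drift_schedule:
  fixes \<eta> \<mu> R :: real and t :: nat
  defines "\<theta> \<equiv> \<lambda>t. \<eta> * (u + real t) powr \<gamma> / a" and "s \<equiv> a / (u + real t) powr \<gamma>"
  assumes x: "x \<in> X" "dir_mgf lam x \<le> ennreal M" and R: "\<forall>y\<in>X. infdist y opt \<le> R"
    and pos: "0 < lam" "0 \<le> M" "0 < \<eta>" and t: "1 \<le> u + real t" and \<mu>: "\<mu> = 6 / (a * \<kappa>)"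
    and small: "2 * \<eta> * exp (\<mu> * R) \<le> lam / 2" "16 * \<eta> * (exp (\<mu> * R))\<^sup>2 * M / lam\<^sup>2 \<le> \<kappa> / 12"
      "s * \<mu> * exp (\<mu> * R) * M / lam\<^sup>2 \<le> \<kappa> / 24"
  shows "(\<integral>\<^sup>+z. ennreal (exp (\<theta> (Suc t) * scaled_expm1 \<mu>
        (infdist (closest_point X (x - s *\<^sub>R kw_dir l \<nu> x (fst z) (snd z))) opt))) \<partial>(D \<Otimes>\<^sub>M D))
    \<le> ennreal (exp (- (\<eta> * \<kappa> / 12)) * exp (\<theta> t * scaled_expm1 \<mu> (infdist x opt))
               + exp (6 * \<eta> * exp (\<mu> * R) * M / (lam\<^sup>2 * \<kappa>)) * M)"
proof -
  have s: "0 < s" and \<mu>_pos: "0 < \<mu>" using t step(1) D1(1) by (simp_all add: s_def \<mu>)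
  have \<theta>_Suc: "\<theta> (Suc t) = \<eta> * (u + real t + 1) powr \<gamma> / a" by (simp add: \<theta>_def algebra_simps)
  have \<theta>_t: "\<theta> t = \<eta> * (u + real t) powr \<gamma> / a" by (simp add: \<theta>_def)
  note schedule = powr_schedule[OF t step(3,4,1) pos(3), folded \<theta>_Suc \<theta>_t s_def]
  have "(\<theta> (Suc t) - \<theta> t) / \<mu> \<le> (\<eta> / a) / \<mu>" using schedule(4) \<mu>_pos by (intro divide_right_mono) auto
  also have "\<dots> = \<eta> * \<kappa> / 6" using step(1) D1(1) by (simp add: \<mu>)
  finally have \<theta>_step: "(\<theta> (Suc t) - \<theta> t) / \<mu> \<le> \<eta> * \<kappa> / 6" .
  have "0 \<le> \<theta> t" using pos(3) step(1) by (simp add: \<theta>_def)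
  then have "one_step_drift (D \<Otimes>\<^sub>M D) (\<lambda>z. kw_dir l \<nu> x (fst z) (snd z)) X opt x R lam M \<kappa> \<mu> s \<eta>
      (\<theta> t) (\<theta> (Suc t))"
    unfolding one_step_drift_def
    using prob_space_pair[OF D(1) D(1)] kw_dir_frozen_measurable x X opt R kw_dir_drift[OF x(1)]
      pos \<mu>_pos s schedule \<theta>_step small D1(1)
    by (auto simp: dir_mgf_def)
  then show ?thesis by (rule one_step_drift.drift_bound)
qed

lemma exp_moment_bound_decreasing_steps:
  assumes \<gamma>: "0 < \<gamma>" and R: "0 < R" "\<forall>y\<in>X. infdist y opt \<le> R"
  obtains I B \<theta> T0 where "0 < I" "0 \<le> B" "\<And>t. I * tpow t \<gamma> \<le> \<theta> (Suc t)"
    "\<And>t. T0 \<le> t \<Longrightarrow> (\<integral>\<^sup>+\<omega>. ennreal (exp (\<theta> t * infdist (xt t \<omega>) opt)) \<partial>P) \<le> ennreal B"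
proof -
  obtain lam M0 where lam: "0 < lam" and conditional: "\<And>t. AE \<omega> in P. nn_cond_exp P (kw_filt P N Wp Wm t)
      (\<lambda>\<omega>. ennreal (exp (lam * norm (kw_dir l \<nu> (xt t \<omega>) (Wp t \<omega>) (Wm t \<omega>))))) \<omega> \<le> ennreal M0"
    using D2 by blast
  define M where "M = max M0 0"
  have M: "0 \<le> M" "ennreal M0 = ennreal M" by (auto simp: M_def max_def ennreal_neg)
  have moment: "AE \<omega> in P. dir_mgf lam (xt t \<omega>) \<le> ennreal M" for t
    using dir_mgf_AE_le[OF conditional[of t]] M(2) by simp
  \<comment> \<open>\<open>\<theta>\<close> grows by at most \<open>\<eta> / a\<close> per step, so this \<open>\<mu>\<close> gives \<open>(\<theta> (t + 1) - \<theta> t) / \<mu> \<le> \<eta> \<kappa> / 6\<close>;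
      \<open>\<eta>\<close> and the eventual bound on the step size enforce the smallness conditions of
      \<open>one_step_drift\<close>.\<close>
  define \<mu> E where "\<mu> = 6 / (a * \<kappa>)" and "E = exp (\<mu> * R)"
  define \<eta> where "\<eta> = min (lam / (4 * E)) (\<kappa> / (192 * E\<^sup>2 * M / lam\<^sup>2 + 1))"
  define \<theta> where "\<theta> t = \<eta> * (u + real t) powr \<gamma> / a" for t
  define \<rho> C where "\<rho> = exp (- (\<eta> * \<kappa> / 12))" and "C = exp (6 * \<eta> * E * M / (lam\<^sup>2 * \<kappa>)) * M"
  have \<mu>: "0 < \<mu>" and E: "1 \<le> E" using step D1(1) R by (simp_all add: \<mu>_def E_def)
  have den: "0 < 192 * E\<^sup>2 * M / lam\<^sup>2 + 1" using M by (simp add: add_nonneg_pos)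
  have \<eta>: "0 < \<eta>" using lam E D1(1) den by (simp add: \<eta>_def)
  have small_\<eta>: "2 * \<eta> * exp (\<mu> * R) \<le> lam / 2" "16 * \<eta> * (exp (\<mu> * R))\<^sup>2 * M / lam\<^sup>2 \<le> \<kappa> / 12"
  proof -
    have "\<eta> \<le> lam / (4 * E)" by (simp add: \<eta>_def)
    then have "\<eta> * (4 * E) \<le> lam" using E by (simp add: pos_le_divide_eq)
    then show "2 * \<eta> * exp (\<mu> * R) \<le> lam / 2" by (simp add: E_def)
    have "\<eta> \<le> \<kappa> / (192 * E\<^sup>2 * M / lam\<^sup>2 + 1)" by (simp add: \<eta>_def)
    then have "\<eta> * (192 * E\<^sup>2 * M / lam\<^sup>2 + 1) \<le> \<kappa>" using den by (simp add: pos_le_divide_eq)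
    then show "16 * \<eta> * (exp (\<mu> * R))\<^sup>2 * M / lam\<^sup>2 \<le> \<kappa> / 12"
      using \<eta> by (simp add: E_def algebra_simps)
  qed
  have den': "0 < 24 * \<mu> * E * M / lam\<^sup>2 + 1" using \<mu> E M by (simp add: add_nonneg_pos)
  obtain T0 where T0: "\<And>t. T0 \<le> t \<Longrightarrow> 1 \<le> u + real t \<and> a / (u + real t) powr \<gamma> \<le> \<kappa> / (24 * \<mu> * E * M / lam\<^sup>2 + 1)"
    using eventually_powr_step_le[OF \<gamma> step(1) divide_pos_pos[OF D1(1) den'] step(2)] by blast
  have drift: "(\<integral>\<^sup>+z. ennreal (exp (\<theta> (Suc t) * scaled_expm1 \<mu> (infdist (closest_point X
        (x - (a / (u + real t) powr \<gamma>) *\<^sub>R kw_dir l \<nu> x (fst z) (snd z))) opt))) \<partial>(D \<Otimes>\<^sub>M D))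
      \<le> ennreal (\<rho> * exp (\<theta> t * scaled_expm1 \<mu> (infdist x opt)) + C)"
    if t: "T0 \<le> t" and x: "x \<in> X" "dir_mgf lam x \<le> ennreal M" for t x
  proof -
    have ut: "1 \<le> u + real t" and small: "a / (u + real t) powr \<gamma> \<le> \<kappa> / (24 * \<mu> * E * M / lam\<^sup>2 + 1)"
      using T0[OF t] by simp_all
    then have "a / (u + real t) powr \<gamma> * (24 * \<mu> * E * M / lam\<^sup>2 + 1) \<le> \<kappa>"
      using den' by (simp add: pos_le_divide_eq)
    moreover have "0 \<le> a / (u + real t) powr \<gamma>" using step(1) by simp
    ultimately have "a / (u + real t) powr \<gamma> * \<mu> * exp (\<mu> * R) * M / lam\<^sup>2 \<le> \<kappa> / 24"
      by (simp add: E_def algebra_simps)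
    from kw_one_step_drift_schedule[OF x R(2) lam M(1) \<eta> ut \<mu>_def small_\<eta> this]
    show ?thesis by (simp add: \<theta>_def \<rho>_def C_def E_def)
  qed
  define B where "B = max (exp (\<theta> T0 * scaled_expm1 \<mu> R)) (C / (1 - \<rho>))"
  have \<rho>: "0 < \<rho>" "\<rho> < 1" using \<eta> D1(1) by (simp_all add: \<rho>_def)
  have C: "0 \<le> C" using M by (simp add: C_def)
  have B: "0 \<le> B" "\<rho> * B + C \<le> B"
    using \<rho> C by (auto simp: B_def field_simps max_def)
  have V_measurable: "(\<lambda>x. exp (\<theta> t * scaled_expm1 \<mu> (infdist x opt))) \<in> borel_measurable borel" for t
    unfolding scaled_expm1_def using \<mu> by (intro borel_measurable_continuous_onI continuous_intros) auto
  have initial: "exp (\<theta> T0 * scaled_expm1 \<mu> (infdist x opt)) \<le> B" if "x \<in> X" for x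
  proof -
    have "\<theta> T0 * scaled_expm1 \<mu> (infdist x opt) \<le> \<theta> T0 * scaled_expm1 \<mu> R"
      using that R(2) \<mu> \<eta> step(1) by (intro mult_left_mono scaled_expm1_mono) (auto simp: \<theta>_def)
    then show ?thesis by (simp add: B_def le_max_iff_disj)
  qed
  have potential: "(\<integral>\<^sup>+\<omega>. ennreal (exp (\<theta> t * scaled_expm1 \<mu> (infdist (xt t \<omega>) opt))) \<partial>P) \<le> ennreal B"
    if "T0 \<le> t" for t
    using lyapunov_bound[OF V_measurable _ moment drift initial B(2) less_imp_le[OF \<rho>(1)] C that] by simp
  show thesis
  proof (rule that[of "\<eta> / a" B \<theta> T0])
    show "0 < \<eta> / a" using \<eta> step(1) by simp
    show "\<eta> / a * tpow t \<gamma> \<le> \<theta> (Suc t)" for t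
      using \<gamma> \<eta> step powr_mono2[of \<gamma> "real t" "u + real (Suc t)"]
      by (auto simp: tpow_def \<theta>_def divide_right_mono mult_left_mono)
    show "(\<integral>\<^sup>+\<omega>. ennreal (exp (\<theta> t * infdist (xt t \<omega>) opt)) \<partial>P) \<le> ennreal B" if "T0 \<le> t" for t
    proof (rule order_trans[OF nn_integral_mono potential[OF that]])
      show "ennreal (exp (\<theta> t * infdist (xt t \<omega>) opt))
          \<le> ennreal (exp (\<theta> t * scaled_expm1 \<mu> (infdist (xt t \<omega>) opt)))" for \<omega>
        using mult_left_mono[OF le_scaled_expm1[OF \<mu>, of "infdist (xt t \<omega>) opt"], of "\<theta> t"] \<eta> step(1)
        by (simp add: \<theta>_def ennreal_leI)
    qed
  qed (use B in auto)
qed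

lemma exp_moment_bound:
  assumes R: "0 < R" "\<forall>y\<in>X. infdist y opt \<le> R"
  obtains I B \<theta> T0 where "0 < I" "0 \<le> B" "\<And>t. I * tpow t \<gamma> \<le> \<theta> (Suc t)"
    "\<And>t. T0 \<le> t \<Longrightarrow> (\<integral>\<^sup>+\<omega>. ennreal (exp (\<theta> t * infdist (xt t \<omega>) opt)) \<partial>P) \<le> ennreal B"
proof (cases "\<gamma> = 0")
  case True
  have "(\<integral>\<^sup>+\<omega>. ennreal (exp (infdist (xt t \<omega>) opt)) \<partial>P) \<le> (\<integral>\<^sup>+\<omega>. ennreal (exp R) \<partial>P)" for t
    using R(2) kw_iter_in_X by (intro nn_integral_mono) auto
  then show thesis using True by (intro that[of 1 "exp R" "\<lambda>_. 1" 0]) (auto simp: tpow_def P.emeasure_space_1)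
next
  case False
  then have "0 < \<gamma>" using step(3) by simp
  show thesis by (rule exp_moment_bound_decreasing_steps[OF \<open>0 < \<gamma>\<close> R that])
qed

lemma expected_gap_le:
  assumes lip: "C-lipschitz_on X (lmean D l)"
  shows "(\<integral>\<omega>. lmean D l (xt t \<omega>) - (INF y\<in>X. lmean D l y) \<partial>P) \<le> C * (\<integral>\<omega>. infdist (xt t \<omega>) opt \<partial>P)"
proof -
  obtain R where R: "\<forall>y\<in>X. infdist y opt \<le> R" using infdist_bounded[OF bounded opt(2,3)] by blast
  have gap: "0 \<le> lmean D l (xt t \<omega>) - (INF y\<in>X. lmean D l y)"
    "lmean D l (xt t \<omega>) - (INF y\<in>X. lmean D l y) \<le> C * infdist (xt t \<omega>) opt" for \<omega>
    using optimality_gap_le_lipschitz[OF lip kw_iter_in_X refl opt(1,2)] by auto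
  have dist_integrable: "integrable P (\<lambda>\<omega>. infdist (xt t \<omega>) opt)"
    using R kw_iter_in_X by (intro P.integrable_const_bound[where B=R]) (auto simp: infdist_nonneg)
  have "(\<lambda>\<omega>. lmean D l (xt t \<omega>) - (INF y\<in>X. lmean D l y)) \<in> borel_measurable P"
    using measurable_compose[OF kw_iter_borel_measurable lmean_measurable] by measurable
  then have "integrable P (\<lambda>\<omega>. lmean D l (xt t \<omega>) - (INF y\<in>X. lmean D l y))"
    using gap lipschitz_on_nonneg[OF lip]
    by (intro Bochner_Integration.integrable_bound[OF integrable_mult_right[OF dist_integrable, of C]] AE_I2)
       (auto simp: infdist_nonneg)
  then show ?thesis
    using integral_mono[OF _ integrable_mult_right[OF dist_integrable, of C]] gap(2) by simp
qed

theorem kw_rates: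
  "\<exists>J I K L. J > 0 \<and> I > 0 \<and> K > 0 \<and> L > 0 \<and>
     (\<forall>t z. z \<ge> 0 \<longrightarrow>
        measure P {\<omega> \<in> space P. infdist (xt (Suc t) \<omega>) opt \<ge> z} \<le> J * exp (- I * tpow t \<gamma> * z)) \<and>
     (\<forall>t\<ge>1. (\<integral>\<omega>. infdist (xt (Suc t) \<omega>) opt \<partial>P) \<le> K / real t powr \<gamma>
           \<and> (\<integral>\<omega>. lmean D l (xt (Suc t) \<omega>) - (INF y\<in>X. lmean D l y) \<partial>P) \<le> L / real t powr \<gamma>)"
proof -
  obtain R where R: "0 < R" "\<forall>y\<in>X. infdist y opt \<le> R" using infdist_bounded[OF bounded opt(2,3)] by blast
  obtain \<theta> I T0 B where I: "0 < I" and B: "0 \<le> B" and \<theta>: "\<And>t. I * tpow t \<gamma> \<le> \<theta> (Suc t)"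
    and moment: "\<And>t. T0 \<le> t \<Longrightarrow> (\<integral>\<^sup>+\<omega>. ennreal (exp (\<theta> t * infdist (xt t \<omega>) opt)) \<partial>P) \<le> ennreal B"
    by (rule exp_moment_bound[OF R]) blast
  have dist_le: "infdist (xt t \<omega>) opt \<le> R" for t \<omega> using R(2) kw_iter_in_X by blast
  note moment_bound = infdist_opt_measurable infdist_nonneg dist_le step(3,4) I \<theta> B moment
  obtain J where J: "0 < J"
    and tail: "\<forall>t z. 0 \<le> z \<longrightarrow> measure P {\<omega>\<in>space P. z \<le> infdist (xt (Suc t) \<omega>) opt} \<le> J * exp (- I * tpow t \<gamma> * z)"
    using P.tail_bound_of_exp_moment[OF moment_bound] by blast
  obtain K where K: "0 < K"
    and mean: "\<forall>t\<ge>1. (\<integral>\<omega>. infdist (xt (Suc t) \<omega>) opt \<partial>P) \<le> K / real t powr \<gamma>"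
    using P.expectation_bound_of_exp_moment[OF moment_bound] by blast
  obtain C where C: "C-lipschitz_on X (lmean D l)" using lipschitz by blast
  have "(\<integral>\<omega>. lmean D l (xt (Suc t) \<omega>) - (INF y\<in>X. lmean D l y) \<partial>P) \<le> (C + 1) * K / real t powr \<gamma>"
    if "1 \<le> t" for t
  proof -
    have "(\<integral>\<omega>. lmean D l (xt (Suc t) \<omega>) - (INF y\<in>X. lmean D l y) \<partial>P) \<le> C * (K / real t powr \<gamma>)"
      using expected_gap_le[OF C] mult_left_mono[OF mean[rule_format, OF that] lipschitz_on_nonneg[OF C]]
      by (rule order_trans)
    also have "\<dots> \<le> (C + 1) * (K / real t powr \<gamma>)" using K that by (intro mult_right_mono) auto
    finally show ?thesis by simp
  qed
  then show ?thesis
    using J K tail mean lipschitz_on_nonneg[OF C] I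
    by (intro exI[of _ J] exI[of _ I] exI[of _ K] exI[of _ "(C + 1) * K"]) (auto intro: add_nonneg_pos)
qed

end

theorem theorem3:
  fixes X :: "(real^'n) set"
    and P :: "'o measure" and N :: "'w measure" and D :: "'w measure"
    and l :: "real^'n \<Rightarrow> 'w \<Rightarrow> real"
    and g :: "real^'n \<Rightarrow> real^'n"
    and Wp Wm :: "nat \<Rightarrow> 'o \<Rightarrow> 'w"
    and x0 :: "real^'n"
    and a u \<gamma> \<nu> \<kappa> c :: real
  assumes X: "X \<noteq> {}" "closed X" "bounded X" "convex X"
    and P: "prob_space P"
    and D: "prob_space D" "sets D = sets N"
    and Wmeas: "\<And>t. Wp t \<in> measurable P N" "\<And>t. Wm t \<in> measurable P N"
    and Wdist: "\<And>t. distr P N (Wp t) = D" "\<And>t. distr P N (Wm t) = D"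
    and Windep: "prob_space.indep_vars P (\<lambda>_. N)
                   (\<lambda>i. case i of Inl t \<Rightarrow> Wp t | Inr t \<Rightarrow> Wm t) (UNIV :: (nat + nat) set)"
    and lmeas: "(\<lambda>(y, w). l y w) \<in> borel_measurable (borel \<Otimes>\<^sub>M N)"
    and lint: "\<And>y. integrable D (l y)"
    and lvar: "\<exists>B. \<forall>y\<in>X. integrable D (\<lambda>w. (l y w)\<^sup>2) \<and> prob_space.variance D (l y) \<le> B"
    and lip: "\<exists>C. C-lipschitz_on X (lmean D l)"
    and grad: "\<forall>y\<in>X. ((lmean D l) has_derivative (\<lambda>h. g y \<bullet> h)) (at y)
                       \<or> (\<forall>z\<in>X. lmean D l z \<ge> lmean D l y + g y \<bullet> (z - y))"
    and x0: "x0 \<in> X"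
    and step: "a > 0" "u > 0" "0 \<le> \<gamma>" "\<gamma> \<le> 1"
    and nu: "\<nu> > 0"
    and D1: "\<kappa> > 0" "\<forall>y\<in>X. \<forall>ys\<in>{xs \<in> X. \<forall>y\<in>X. lmean D l xs \<le> lmean D l y}. dist y ys = infdist y {xs \<in> X. \<forall>y\<in>X. lmean D l xs \<le> lmean D l y}
                 \<longrightarrow> g y \<bullet> (y - ys) \<ge> \<kappa> * norm (y - ys)"
    and D2: "\<exists>lam>0. \<exists>M::real. \<forall>t. AE \<omega> in P.
               nn_cond_exp P (kw_filt P N Wp Wm t) (\<lambda>\<omega>. ennreal (exp (lam * norm (kw_dir l \<nu> (kw_iter X l \<nu> (\<lambda>t. a / (u + real t) powr \<gamma>) x0 Wp Wm t \<omega>) (Wp t \<omega>) (Wm t \<omega>))))) \<omega> \<le> ennreal M"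
    and D3: "c > 0" "\<forall>y\<in>X. norm (g y - (1 / (2 * \<nu>)) *\<^sub>R (\<chi> i. lmean D l (y + \<nu> *\<^sub>R axis i 1) - lmean D l (y - \<nu> *\<^sub>R axis i 1)))
                 \<le> c * \<nu>\<^sup>2"
    and nu_small: "\<nu> \<le> sqrt (\<kappa> / (3 * c))"
  shows "\<exists>J I K L. J > 0 \<and> I > 0 \<and> K > 0 \<and> L > 0 \<and>
     (\<forall>t z. z \<ge> 0 \<longrightarrow>
        measure P {\<omega> \<in> space P. infdist (kw_iter X l \<nu> (\<lambda>t. a / (u + real t) powr \<gamma>) x0 Wp Wm (Suc t) \<omega>) {xs \<in> X. \<forall>y\<in>X. lmean D l xs \<le> lmean D l y} \<ge> z} \<le> J * exp (- I * tpow t \<gamma> * z)) \<and>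
     (\<forall>t\<ge>1. (\<integral>\<omega>. infdist (kw_iter X l \<nu> (\<lambda>t. a / (u + real t) powr \<gamma>) x0 Wp Wm (Suc t) \<omega>) {xs \<in> X. \<forall>y\<in>X. lmean D l xs \<le> lmean D l y} \<partial>P) \<le> K / real t powr \<gamma>
           \<and> (\<integral>\<omega>. lmean D l (kw_iter X l \<nu> (\<lambda>t. a / (u + real t) powr \<gamma>) x0 Wp Wm (Suc t) \<omega>) - (INF y\<in>X. lmean D l y) \<partial>P) \<le> L / real t powr \<gamma>)"
proof -
  interpret kw_problem X P N D l Wp Wm x0 \<nu> a u \<gamma> g \<kappa> c
    using X P D Wmeas Wdist Windep lmeas x0 lint lip step nu D1 D2 D3 nu_small
    by (simp add: kw_problem_def kw_process_def kw_problem_axioms_def)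
  show ?thesis by (rule kw_rates)
qed

end
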